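(* Under Assumptions A1–A3 below, for all positive integers $k$, \[ \frac{\partial^k\hat\lambda_\psi}{\partial\psi^k}\Big|_{\psi=\hat\psi}=O_p(1),\quad \frac{d^k}{d\psi^k}\tilde\jmath_{\lambda\psi}\Big|_{\psi=\hat\psi}=O_p(n),\quad \frac{d^k}{d\psi^k}\tilde\jmath_{\lambda\lambda}\Big|_{\psi=\hat\psi}=O_p(n), \] \[ \kappa_k(\hat\psi)=O_p\{n^{-(k-2)/2}\},\qquad \gamma_k(\hat\psi)=O_p(1). \]
   Context: Data $y=(y_1,\dots,y_n)$ are generated independently from a parametric model with parameter $\theta=(\psi,\lambda)$, $\psi$ a scalar parameter of interest, $\lambda\in\mathbb{R}^{p-1}$ a nuisance parameter ($p$ fixed, $n\to\infty$); true value $\theta_0=(\psi_0,\lambda_0)$. Let $l(\theta)$ be the log-likelihood, $\hat\theta=(\hat\psi,\hat\lambda)$ the MLE, $\hat\lambda_\psi$ the maximizer of $l(\psi,\cdot)$ for fixed $\psi$, $\hat\theta_\psi=(\psi,\hat\lambda_\psi)$. Let $j(\theta)=-\partial^2 l/\partial\theta\partial\theta^\top$, $\hat\jmath=j(\hat\theta)$, and $j_{\lambda\lambda}$, $j_{\lambda\psi}$ its nuisance–nuisance and nuisance–interest blocks; $\tilde\jmath_{\lambda\lambda}=j_{\lambda\lambda}(\psi,\hat\lambda_\psi)$, $\tilde\jmath_{\lambda\psi}=j_{\lambda\psi}(\psi,\hat\lambda_\psi)$, viewed as functions of $\psi$, with $d/d\psi$ the total derivative. Let $l_{\mathrm p}(\psi)=l(\psi,\hat\lambda_\psi)$,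 $\zeta_k(\psi)=d^kl_{\mathrm p}(\psi)/d\psi^k$, $\kappa_k(\psi)=\zeta_k(\psi)/\{-\zeta_2(\psi)\}^{k/2}$, and $\gamma_k(\psi)=d^k\log|j_{\lambda\lambda}(\psi,\hat\lambda_\psi)|/d\psi^k$. Assumptions: (A1) all $k$-th order partial derivatives of $l$ with respect to the components of $\theta$, $k>1$, are $O_p(n)$ at $\hat\theta$; (A2) $\hat\theta-\theta_0=O_p(n^{-1/2})$; (A3) the eigenvalues of $\hat\jmath/n$, $j(\hat\theta_{\psi_0})/n$, $n\hat\jmath^{-1}$, $n\,j^{-1}(\hat\theta_{\psi_0})$ are positive and $O_p(1)$. *)

theory Defs
  imports "HOL-Probability.Probability"
begin

text \<open>Parameter theta = (psi, lambda) with psi real and lambda in real^'m (p - 1 = CARD('m)).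
  Coordinates of theta are indexed by 'm option: None is psi, Some i is lambda_i.\<close>

definition coord :: "real \<times> (real^'m) \<Rightarrow> 'm option \<Rightarrow> real" where
  "coord th j = (case j of None \<Rightarrow> fst th | Some i \<Rightarrow> snd th $ i)"

definition upd :: "real \<times> (real^'m) \<Rightarrow> 'm option \<Rightarrow> real \<Rightarrow> real \<times> (real^'m)" where
  "upd th j t = (case j of None \<Rightarrow> (t, snd th)
                 | Some i \<Rightarrow> (fst th, \<chi> k. if k = i then t else snd th $ k))"

definition pd :: "(real \<times> (real^'m) \<Rightarrow> real) \<Rightarrow> 'm option \<Rightarrow> real \<times> (real^'m) \<Rightarrow> real" where
  "pd f j th = deriv (\<lambda>t. f (upd th j t)) (coord th j)"

fun pds :: "(real \<times> (real^'m) \<Rightarrow> real) \<Rightarrow> 'm option list \<Rightarrow> real \<times> (real^'m) \<Rightarrow> real" where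
  "pds f [] = f"
| "pds f (j # js) = pd (pds f js) j"

definition smooth_fun :: "(real \<times> (real^'m) \<Rightarrow> real) \<Rightarrow> bool" where
  "smooth_fun f \<longleftrightarrow> (\<forall>js. continuous_on UNIV (pds f js) \<and>
      (\<forall>j th. (\<lambda>t. pds f js (upd th j t)) differentiable (at (coord th j))))"

definition obs_info :: "(real \<times> (real^'m) \<Rightarrow> real) \<Rightarrow> real \<times> (real^'m) \<Rightarrow> real^('m option)^('m option)" where
  "obs_info f th = (\<chi> a b. - pds f [a, b] th)"

definition info_ll :: "(real \<times> (real^'m) \<Rightarrow> real) \<Rightarrow> real \<times> (real^'m) \<Rightarrow> real^'m^'m" where
  "info_ll f th = (\<chi> i k. - pds f [Some i, Some k] th)"

definition info_lp :: "(real \<times> (real^'m) \<Rightarrow> real) \<Rightarrow> real \<times> (real^'m) \<Rightarrow> real^'m" where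
  "info_lp f th = (\<chi> i. - pds f [Some i, None] th)"

definition zeta :: "(real \<times> (real^'m) \<Rightarrow> real) \<Rightarrow> (real \<Rightarrow> real^'m) \<Rightarrow> nat \<Rightarrow> real \<Rightarrow> real" where
  "zeta f lam k psi = (deriv ^^ k) (\<lambda>t. f (t, lam t)) psi"

definition kappa :: "(real \<times> (real^'m) \<Rightarrow> real) \<Rightarrow> (real \<Rightarrow> real^'m) \<Rightarrow> nat \<Rightarrow> real \<Rightarrow> real" where
  "kappa f lam k psi = zeta f lam k psi / (- zeta f lam 2 psi) powr (real k / 2)"

definition gam :: "(real \<times> (real^'m) \<Rightarrow> real) \<Rightarrow> (real \<Rightarrow> real^'m) \<Rightarrow> nat \<Rightarrow> real \<Rightarrow> real" where
  "gam f lam k psi = (deriv ^^ k) (\<lambda>t. ln (det (info_ll f (t, lam t)))) psi"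

definition mat_eigenvalue :: "real^'k^'k \<Rightarrow> real \<Rightarrow> bool" where
  "mat_eigenvalue A e \<longleftrightarrow> (\<exists>v. v \<noteq> 0 \<and> A *v v = e *\<^sub>R v)"

text \<open>Stochastic order X_n = O_p(a_n) (with outer probability, no measurability needed).\<close>
definition Op :: "'a measure \<Rightarrow> (nat \<Rightarrow> 'a \<Rightarrow> 'b::real_normed_vector) \<Rightarrow> (nat \<Rightarrow> real) \<Rightarrow> bool" where
  "Op M X a \<longleftrightarrow> (\<forall>\<epsilon>>0. \<exists>C N. \<forall>n\<ge>N. \<exists>A\<in>sets M.
      {\<omega>\<in>space M. norm (X n \<omega>) > C * a n} \<subseteq> A \<and> measure M A < \<epsilon>)"

definition Op_eig :: "'a measure \<Rightarrow> (nat \<Rightarrow> 'a \<Rightarrow> real^'k^'k) \<Rightarrow> (nat \<Rightarrow> real) \<Rightarrow> bool" where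
  "Op_eig M A a \<longleftrightarrow> (\<forall>\<epsilon>>0. \<exists>C N. \<forall>n\<ge>N. \<exists>B\<in>sets M.
      {\<omega>\<in>space M. \<exists>e. mat_eigenvalue (A n \<omega>) e \<and> \<bar>e\<bar> > C * a n} \<subseteq> B \<and> measure M B < \<epsilon>)"

end

theory Submission
  imports Defs
begin

text \<open>Near the maximum likelihood estimate, each quantity in the statement is \<open>1\<close> or \<open>n\<close> times a
  polynomial in the scaled partial derivatives \<open>n\<^sup>-\<^sup>1 \<partial>\<^sup>J l(\<psi>, \<lambda>\<^sub>\<psi>)\<close> of order at least two and in
  \<open>1 / det (n\<^sup>-\<^sup>1 \<jmath>\<^sub>\<lambda>\<^sub>\<lambda>(\<psi>, \<lambda>\<^sub>\<psi>))\<close>. Differentiating the stationarity equations \<open>\<partial>\<^sub>\<lambda> l(\<psi>, \<lambda>\<^sub>\<psi>) = 0\<close> and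
  solving by Cramer's rule shows that \<open>d\<lambda>\<^sub>\<psi>/d\<psi>\<close> is such a polynomial, so by the chain rule the class
  is closed under \<open>d/d\<psi>\<close>. At the estimate the scaled partials are \<open>O\<^sub>p(1)\<close> by (A1), and \<open>1 / det\<close> is
  bounded by a power of the largest eigenvalue of \<open>n \<jmath>\<^sup>-\<^sup>1\<close>, which is \<open>O\<^sub>p(1)\<close> by (A3). For \<open>\<kappa>\<^sub>k\<close>
  one also needs \<open>-\<zeta>\<^sub>2/n\<close> bounded away from zero: it equals \<open>v\<^sup>T (\<jmath>/n) v\<close> with
  \<open>v = (1, d\<lambda>\<^sub>\<psi>/d\<psi>)\<close>, and \<open>|v| \<ge> 1\<close>.\<close>

definition of_coords :: "('m option \<Rightarrow> real) \<Rightarrow> real \<times> (real^'m)" where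
  "of_coords g = (g None, \<chi> i. g (Some i))"

lemma coord_of_coords [simp]: "coord (of_coords g) c = g c"
  by (simp add: of_coords_def coord_def split: option.splits)

lemma coord_eqI: "(\<And>c. coord x c = coord y c) \<Longrightarrow> x = y"
proof -
  assume h: "\<And>c. coord x c = coord y c"
  have "fst x = fst y" using h[of None] by (simp add: coord_def)
  moreover have "snd x = snd y" using h by (simp add: coord_def vec_eq_iff) (metis option.simps(5))
  ultimately show ?thesis by (simp add: prod_eq_iff)
qed

lemma coord_add [simp]: "coord (x + y) c = coord x c + coord y c"
  and coord_diff [simp]: "coord (x - y) c = coord x c - coord y c"
  and coord_zero [simp]: "coord 0 c = 0"
  and coord_scaleR [simp]: "coord (a *\<^sub>R x) c = a * coord x c"
  and coord_upd [simp]: "coord (upd th j t) c = (if c = j then t else coord th c)"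
  and coord_Pair_None [simp]: "coord (a, b) None = a"
  and coord_Pair_Some [simp]: "coord (a, b) (Some i) = b $ i"
  by (auto simp: coord_def upd_def split: option.splits)

lemma of_coords_coord [simp]: "of_coords (coord th) = th"
  and upd_upd_same [simp]: "upd (upd th j s) j t = upd th j t"
  by (rule coord_eqI; simp)+

lemma upd_eq_self [simp]: "coord th j = t \<Longrightarrow> upd th j t = th"
  by (rule coord_eqI) auto

lemma upd_upd_commute: "a \<noteq> b \<Longrightarrow> upd (upd th a s) b t = upd (upd th b t) a s"
  by (rule coord_eqI) simp

lemma sum_UNIV_option: "sum g (UNIV :: ('m::finite) option set) = g None + (\<Sum>i\<in>UNIV. g (Some i))"
  by (simp add: UNIV_option_conv sum.reindex)

lemma abs_coord_le_norm: "\<bar>coord x c\<bar> \<le> norm x"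
proof (cases x)
  case (Pair a b)
  have "\<bar>b $ i\<bar> \<le> norm (a, b)" for i
    using Finite_Cartesian_Product.norm_nth_le[of b i] norm_snd_le[of b a] by simp
  moreover have "\<bar>a\<bar> \<le> norm (a, b)"
    using norm_fst_le[of a b] by simp
  ultimately show ?thesis
    using Pair by (cases c) auto
qed

lemma norm_le_sum_abs_coord: "norm x \<le> (\<Sum>c\<in>UNIV. \<bar>coord x c\<bar>)"
proof (cases x)
  case (Pair a b)
  have "norm x \<le> \<bar>a\<bar> + norm b" by (metis Pair norm_Pair_le real_norm_def)
  also have "\<dots> \<le> \<bar>a\<bar> + (\<Sum>i\<in>UNIV. \<bar>b$i\<bar>)" using norm_le_l1_cart[of b] by simp
  also have "\<dots> = (\<Sum>c\<in>UNIV. \<bar>coord x c\<bar>)" using Pair by (simp add: sum_UNIV_option)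
  finally show ?thesis .
qed

lemma bounded_linear_coord: "bounded_linear (\<lambda>h::real \<times> (real^'m). coord h c)"
  by (rule bounded_linear_intro[of _ 1]) (auto simp: abs_coord_le_norm)

lemma pds_append: "pds (pds f js) js' = pds f (js' @ js)"
  by (induction js') auto

lemma smooth_fun_pds: "smooth_fun f \<Longrightarrow> smooth_fun (pds f js)"
  unfolding smooth_fun_def by (simp add: pds_append)

lemma smooth_fun_isCont_pds: "smooth_fun f \<Longrightarrow> isCont (pds f js) x"
  unfolding smooth_fun_def by (metis continuous_on_eq_continuous_at open_UNIV UNIV_I)

lemma smooth_fun_has_derivative_upd:
  assumes "smooth_fun f"
  shows "((\<lambda>t. f (upd th c t)) has_real_derivative pd f c (upd th c t0)) (at t0)"
proof -
  have "(\<lambda>t. pds f [] (upd (upd th c t0) c t)) differentiable (at (coord (upd th c t0) c))"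
    using assms unfolding smooth_fun_def by blast
  then have "(\<lambda>t. f (upd th c t)) differentiable (at t0)" by simp
  moreover have "pd f c (upd th c t0) = deriv (\<lambda>t. f (upd th c t)) t0" by (simp add: pd_def)
  ultimately show ?thesis by (simp add: DERIV_deriv_iff_real_differentiable)
qed

lemma MVT_abs:
  fixes f :: "real \<Rightarrow> real"
  assumes "\<And>x. (f has_real_derivative f' x) (at x)"
  shows "\<exists>z. \<bar>z - a\<bar> \<le> \<bar>b - a\<bar> \<and> f b - f a = (b - a) * f' z"
proof (cases a b rule: linorder_cases)
  case less
  then obtain z where "z > a" "z < b" "f b - f a = (b - a) * f' z"
    using MVT2[of a b f f'] assms by blast
  then show ?thesis by (intro exI[of _ z]) auto
next
  case equal then show ?thesis by auto
next
  case greater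
  then obtain z where "z > b" "z < a" "f a - f b = (a - b) * f' z"
    using MVT2[of b a f f'] assms by blast
  then show ?thesis by (intro exI[of _ z]) (auto simp: algebra_simps)
qed

lemma upd_increment_approx:
  assumes sm: "smooth_fun f"
    and near: "\<And>s. \<bar>s - coord p c\<bar> \<le> \<bar>h\<bar> \<Longrightarrow> \<bar>pd f c (upd p c s) - D\<bar> \<le> e"
  shows "\<bar>f (upd p c (coord p c + h)) - f p - h * D\<bar> \<le> \<bar>h\<bar> * e"
proof -
  obtain z where z: "\<bar>z - coord p c\<bar> \<le> \<bar>h\<bar>"
    and mvt: "f (upd p c (coord p c + h)) - f (upd p c (coord p c)) = h * pd f c (upd p c z)"
    using MVT_abs[of "\<lambda>t. f (upd p c t)" "\<lambda>t. pd f c (upd p c t)" "coord p c" "coord p c + h"]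
      smooth_fun_has_derivative_upd[OF sm, of p c] by auto
  have "\<bar>f (upd p c (coord p c + h)) - f p - h * D\<bar> = \<bar>h\<bar> * \<bar>pd f c (upd p c z) - D\<bar>"
    using mvt by (simp add: abs_mult[symmetric] algebra_simps)
  also have "\<dots> \<le> \<bar>h\<bar> * e" using near[OF z] by (simp add: mult_left_mono)
  finally show ?thesis .
qed

lemma isCont_coord_box:
  fixes g :: "real \<times> (real^'m) \<Rightarrow> real"
  assumes "isCont g th" "e > 0"
  obtains r where "r > 0" "\<And>x. (\<And>c. \<bar>coord x c - coord th c\<bar> \<le> r) \<Longrightarrow> \<bar>g x - g th\<bar> < e"
proof -
  obtain d where d: "d > 0" and cont: "\<And>x. dist x th < d \<Longrightarrow> \<bar>g x - g th\<bar> < e"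
    using assms unfolding continuous_at_eps_delta dist_real_def by blast
  define K where "K = real CARD('m option)"
  have "\<bar>g x - g th\<bar> < e" if box: "\<And>c. \<bar>coord x c - coord th c\<bar> \<le> d / (K + 1)" for x
  proof -
    have "norm (x - th) \<le> (\<Sum>c\<in>UNIV. \<bar>coord (x - th) c\<bar>)" by (rule norm_le_sum_abs_coord)
    also have "\<dots> \<le> (\<Sum>c\<in>(UNIV::'m option set). d / (K + 1))" using box by (intro sum_mono) simp
    also have "\<dots> < d" using d by (simp add: K_def field_simps)
    finally show ?thesis using cont by (simp add: dist_norm)
  qed
  moreover have "d / (K + 1) > 0" using d by (simp add: K_def)
  ultimately show ?thesis using that by blast
qed

lemma upd_increment_approx_box:
  assumes sm: "smooth_fun f"
    and cont: "\<And>x. (\<And>c'. \<bar>coord x c' - coord th c'\<bar> \<le> r) \<Longrightarrow> \<bar>pd f c x - pd f c th\<bar> < e"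
    and p: "\<And>c'. \<bar>coord p c' - coord th c'\<bar> \<le> r" "coord p c = coord th c" and h: "\<bar>h\<bar> \<le> r"
  shows "\<bar>f (upd p c (coord p c + h)) - f p - h * pd f c th\<bar> \<le> \<bar>h\<bar> * e"
proof (rule upd_increment_approx[OF sm])
  fix s assume s: "\<bar>s - coord p c\<bar> \<le> \<bar>h\<bar>"
  have "\<bar>coord (upd p c s) c' - coord th c'\<bar> \<le> r" for c'
    using p order_trans[OF s h] by auto
  then show "\<bar>pd f c (upd p c s) - pd f c th\<bar> \<le> e" using cont by (simp add: less_imp_le)
qed

lemma smooth_fun_increment_approx:
  fixes f :: "real \<times> (real^'m) \<Rightarrow> real"
  assumes sm: "smooth_fun f" and "finite S" and "e > 0"
  shows "\<exists>d>0. \<forall>h. norm h < d \<longrightarrow>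
    \<bar>f (th + of_coords (\<lambda>c. if c \<in> S then coord h c else 0)) - f th - (\<Sum>c\<in>S. pd f c th * coord h c)\<bar>
      \<le> e * norm h"
  using \<open>finite S\<close> \<open>e > 0\<close>
proof (induction S arbitrary: e rule: finite_induct)
  case empty
  have "of_coords (\<lambda>c. 0) = (0::real \<times> (real^'m))" by (rule coord_eqI) simp
  with empty.prems show ?case by (auto intro: exI[of _ 1])
next
  case (insert c S)
  obtain d2 where d2: "d2 > 0" and IH: "\<And>h. norm h < d2 \<Longrightarrow>
      \<bar>f (th + of_coords (\<lambda>c. if c \<in> S then coord h c else 0)) - f th - (\<Sum>c\<in>S. pd f c th * coord h c)\<bar>
        \<le> e/2 * norm h"
    using insert.IH[of "e/2"] insert.prems by auto
  obtain r where r: "r > 0"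
    and cont: "\<And>x. (\<And>c. \<bar>coord x c - coord th c\<bar> \<le> r) \<Longrightarrow> \<bar>pd f c x - pd f c th\<bar> < e/2"
    using isCont_coord_box[OF smooth_fun_isCont_pds[OF sm, where js="[c]" and x=th] half_gt_zero[OF insert.prems]]
    by auto
  define d where "d = min d2 r"
  have "d > 0" using d2 r by (simp add: d_def)
  moreover have "\<bar>f (th + of_coords (\<lambda>d. if d \<in> insert c S then coord h d else 0)) - f th
      - (\<Sum>d\<in>insert c S. pd f d th * coord h d)\<bar> \<le> e * norm h" if hd: "norm h < d" for h
  proof -
    define p where "p = th + of_coords (\<lambda>d. if d \<in> S then coord h d else 0)"
    have pc: "coord p c = coord th c" using insert.hyps by (simp add: p_def)
    have p': "th + of_coords (\<lambda>d. if d \<in> insert c S then coord h d else 0) = upd p c (coord p c + coord h c)"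
      by (rule coord_eqI) (use insert.hyps in \<open>auto simp: p_def\<close>)
    have hr: "\<bar>coord h c'\<bar> \<le> r" for c'
      using abs_coord_le_norm[of h c'] hd by (simp add: d_def)
    have "\<bar>coord p c' - coord th c'\<bar> \<le> r" for c'
      using hr[of c'] less_imp_le[OF r] by (simp add: p_def)
    from upd_increment_approx_box[OF sm cont this pc hr[of c]]
    have "\<bar>f (upd p c (coord p c + coord h c)) - f p - coord h c * pd f c th\<bar> \<le> \<bar>coord h c\<bar> * (e/2)" .
    moreover have "\<bar>f p - f th - (\<Sum>c\<in>S. pd f c th * coord h c)\<bar> \<le> e/2 * norm h"
      using IH[of h] hd by (simp add: d_def p_def)
    moreover have "\<bar>coord h c\<bar> * (e/2) \<le> norm h * (e/2)"
      using abs_coord_le_norm[of h c] insert.prems by (intro mult_right_mono) auto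
    ultimately show ?thesis
      unfolding p' using insert.hyps by (simp add: algebra_simps) (smt (verit))
  qed
  ultimately show ?case by blast
qed

lemma smooth_fun_has_derivative:
  fixes f :: "real \<times> (real^'m) \<Rightarrow> real"
  assumes sm: "smooth_fun f"
  shows "(f has_derivative (\<lambda>h. \<Sum>c\<in>UNIV. pd f c th * coord h c)) (at th)"
  unfolding has_derivative_at'
proof (intro conjI allI impI)
  show "bounded_linear (\<lambda>h::real \<times> (real^'m). \<Sum>c\<in>UNIV. pd f c th * coord h c)"
    by (intro bounded_linear_sum bounded_linear_const_mult bounded_linear_coord)
  fix e :: real assume e: "e > 0"
  obtain d where d: "d > 0" and approx: "\<And>h. norm h < d \<Longrightarrow>
      \<bar>f (th + h) - f th - (\<Sum>c\<in>UNIV. pd f c th * coord h c)\<bar> \<le> e/2 * norm h"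
    using smooth_fun_increment_approx[OF sm, of UNIV "e/2" th] e by auto
  have "norm (f x - f th - (\<Sum>c\<in>UNIV. pd f c th * coord (x - th) c)) / norm (x - th) < e"
    if "0 < norm (x - th)" "norm (x - th) < d" for x
  proof -
    have "norm (f x - f th - (\<Sum>c\<in>UNIV. pd f c th * coord (x - th) c)) \<le> e/2 * norm (x - th)"
      using approx[of "x - th"] that by simp
    also have "\<dots> < e * norm (x - th)" using that e by simp
    finally show ?thesis using that by (simp add: divide_less_eq)
  qed
  with d show "\<exists>d>0. \<forall>x. 0 < norm (x - th) \<and> norm (x - th) < d \<longrightarrow>
      norm (f x - f th - (\<Sum>c\<in>UNIV. pd f c th * coord (x - th) c)) / norm (x - th) < e"
    by blast
qed

lemma vec_has_derivative_componentwise: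
  fixes lam :: "real \<Rightarrow> real^'m"
  assumes "\<And>i. ((\<lambda>t. lam t $ i) has_real_derivative d $ i) (at psi)"
  shows "(lam has_derivative (\<lambda>h. h *\<^sub>R d)) (at psi)"
proof -
  have "((\<lambda>x. lam x \<bullet> i) has_derivative (\<lambda>x. (x *\<^sub>R d) \<bullet> i)) (at psi)" if "i \<in> Basis" for i
  proof -
    obtain j where j: "i = axis j 1" using \<open>i \<in> Basis\<close> unfolding Basis_vec_def by auto
    have "((\<lambda>t. lam t $ j) has_derivative (\<lambda>h. d $ j * h)) (at psi)"
      using assms[of j] by (simp add: has_field_derivative_def)
    then show ?thesis using j by (simp add: inner_axis mult.commute)
  qed
  then show ?thesis using has_derivative_componentwise_within[of lam _ psi UNIV] by simp
qed

lemma smooth_fun_has_derivative_along_curve: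
  fixes f :: "real \<times> (real^'m) \<Rightarrow> real" and lam :: "real \<Rightarrow> real^'m"
  assumes sm: "smooth_fun f" and dl: "\<And>i. ((\<lambda>t. lam t $ i) has_real_derivative d $ i) (at psi)"
  shows "((\<lambda>t. f (t, lam t)) has_real_derivative
    (pd f None (psi, lam psi) + (\<Sum>i\<in>UNIV. pd f (Some i) (psi, lam psi) * d $ i))) (at psi)"
proof -
  have "((\<lambda>t. (t, lam t)) has_derivative (\<lambda>h. (h, h *\<^sub>R d))) (at psi)"
    by (intro has_derivative_Pair has_derivative_ident vec_has_derivative_componentwise dl)
  from has_derivative_compose[OF this smooth_fun_has_derivative[OF sm]]
  have D: "((\<lambda>t. f (t, lam t)) has_derivative
      (\<lambda>h. \<Sum>c\<in>UNIV. pd f c (psi, lam psi) * coord (h, h *\<^sub>R d) c)) (at psi)"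
    by simp
  have E: "(\<lambda>h. \<Sum>c\<in>UNIV. pd f c (psi, lam psi) * coord (h, h *\<^sub>R d) c) =
     (\<lambda>h. (pd f None (psi, lam psi) + (\<Sum>i\<in>UNIV. pd f (Some i) (psi, lam psi) * d $ i)) * h)"
    by (rule ext) (simp add: sum_UNIV_option algebra_simps sum_distrib_left sum_distrib_right)
  show ?thesis using D unfolding E has_field_derivative_def .
qed

lemma pd_eq_0_at_max:
  fixes f :: "real \<times> (real^'m) \<Rightarrow> real"
  assumes sm: "smooth_fun f" and max: "\<And>t. f (upd th c t) \<le> f th"
  shows "pd f c th = 0"
proof -
  have "((\<lambda>t. f (upd th c t)) has_real_derivative pd f c th) (at (coord th c))"
    using smooth_fun_has_derivative_upd[OF sm, of th c "coord th c"] by simp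
  then show ?thesis
    by (rule DERIV_local_max[of _ _ _ 1]) (auto simp: max)
qed

lemma second_difference_MVT:
  fixes f :: "real \<times> (real^'m) \<Rightarrow> real" and th :: "real \<times> (real^'m)" and h :: real
  assumes sm: "smooth_fun f" and ab: "a \<noteq> b"
  defines "pt \<equiv> \<lambda>s t. upd (upd th a s) b t"
  shows "\<exists>\<sigma> \<tau>. \<bar>\<sigma> - coord th a\<bar> \<le> \<bar>h\<bar> \<and> \<bar>\<tau> - coord th b\<bar> \<le> \<bar>h\<bar> \<and>
    f (pt (coord th a + h) (coord th b + h)) - f (pt (coord th a + h) (coord th b))
    - f (pt (coord th a) (coord th b + h)) + f (pt (coord th a) (coord th b))
    = h * h * pds f [b, a] (pt \<sigma> \<tau>)"
proof -
  define s0 t0 where "s0 = coord th a" and "t0 = coord th b"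
  have pt_swap: "pt s t = upd (upd th b t) a s" for s t
    using ab by (simp add: pt_def upd_upd_commute)
  define phi where "phi s = f (pt s (t0 + h)) - f (pt s t0)" for s
  have dphi: "(phi has_real_derivative (pd f a (pt s (t0 + h)) - pd f a (pt s t0))) (at s)" for s
    unfolding phi_def pt_swap by (intro DERIV_diff smooth_fun_has_derivative_upd[OF sm])
  then obtain \<sigma> where \<sigma>: "\<bar>\<sigma> - s0\<bar> \<le> \<bar>h\<bar>"
    and phi_diff: "phi (s0 + h) - phi s0 = h * (pd f a (pt \<sigma> (t0 + h)) - pd f a (pt \<sigma> t0))"
    using MVT_abs[OF dphi, of s0 "s0 + h"] by auto
  have dpd: "((\<lambda>t. pd f a (pt \<sigma> t)) has_real_derivative pds f [b, a] (pt \<sigma> t)) (at t)" for t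
    using smooth_fun_has_derivative_upd[OF smooth_fun_pds[OF sm, of "[a]"], of "upd th a \<sigma>" b t]
    by (simp add: pt_def)
  then obtain \<tau> where \<tau>: "\<bar>\<tau> - t0\<bar> \<le> \<bar>h\<bar>"
    and "pd f a (pt \<sigma> (t0 + h)) - pd f a (pt \<sigma> t0) = h * pds f [b, a] (pt \<sigma> \<tau>)"
    using MVT_abs[OF dpd, of t0 "t0 + h"] by auto
  with \<sigma> phi_diff show ?thesis
    unfolding s0_def t0_def phi_def by (intro exI[of _ \<sigma>] exI[of _ \<tau>]) (simp add: algebra_simps)
qed

text \<open>Schwarz's theorem: both mixed partials are limits of the same second difference quotient.\<close>

lemma pds_commute:
  fixes f :: "real \<times> (real^'m) \<Rightarrow> real"
  assumes sm: "smooth_fun f"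
  shows "pds f [a, b] th = pds f [b, a] th"
proof (cases "a = b")
  case ab: False
  define pt where "pt s t = upd (upd th a s) b t" for s t
  show ?thesis
  proof (rule ccontr)
    assume "pds f [a, b] th \<noteq> pds f [b, a] th"
    define e where "e = \<bar>pds f [a, b] th - pds f [b, a] th\<bar> / 2"
    have "e > 0" using \<open>pds f [a, b] th \<noteq> pds f [b, a] th\<close> by (simp add: e_def)
    obtain r1 where r1: "r1 > 0" and cont1: "\<And>x. (\<And>c. \<bar>coord x c - coord th c\<bar> \<le> r1) \<Longrightarrow>
        \<bar>pds f [a, b] x - pds f [a, b] th\<bar> < e"
      using isCont_coord_box[OF smooth_fun_isCont_pds[OF sm, where js="[a, b]" and x=th] \<open>e > 0\<close>] by blast
    obtain r2 where r2: "r2 > 0" and cont2: "\<And>x. (\<And>c. \<bar>coord x c - coord th c\<bar> \<le> r2) \<Longrightarrow>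
        \<bar>pds f [b, a] x - pds f [b, a] th\<bar> < e"
      using isCont_coord_box[OF smooth_fun_isCont_pds[OF sm, where js="[b, a]" and x=th] \<open>e > 0\<close>] by blast
    define h where "h = min r1 r2"
    have h0: "h > 0" using r1 r2 by (simp add: h_def)
    have close: "\<bar>coord (pt s t) c - coord th c\<bar> \<le> r1" "\<bar>coord (pt s t) c - coord th c\<bar> \<le> r2"
      if "\<bar>s - coord th a\<bar> \<le> h" "\<bar>t - coord th b\<bar> \<le> h" for s t c
      using that r1 r2 by (auto simp: pt_def h_def)
    obtain \<sigma> \<tau> where st: "\<bar>\<sigma> - coord th a\<bar> \<le> h" "\<bar>\<tau> - coord th b\<bar> \<le> h"
      and D1: "f (pt (coord th a + h) (coord th b + h)) - f (pt (coord th a + h) (coord th b))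
          - f (pt (coord th a) (coord th b + h)) + f (pt (coord th a) (coord th b))
          = h * h * pds f [b, a] (pt \<sigma> \<tau>)"
      using second_difference_MVT[OF sm ab, of th h] h0 unfolding pt_def by auto
    obtain \<tau>' \<sigma>' where st': "\<bar>\<tau>' - coord th b\<bar> \<le> h" "\<bar>\<sigma>' - coord th a\<bar> \<le> h"
      and D2: "f (pt (coord th a + h) (coord th b + h)) - f (pt (coord th a) (coord th b + h))
          - f (pt (coord th a + h) (coord th b)) + f (pt (coord th a) (coord th b))
          = h * h * pds f [a, b] (pt \<sigma>' \<tau>')"
      using second_difference_MVT[OF sm, of b a th h] ab h0
      unfolding pt_def by (auto simp: upd_upd_commute[OF ab])
    have "pds f [b, a] (pt \<sigma> \<tau>) = pds f [a, b] (pt \<sigma>' \<tau>')"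
      using D1 D2 h0 by (simp add: algebra_simps)
    moreover have "\<bar>pds f [b, a] (pt \<sigma> \<tau>) - pds f [b, a] th\<bar> < e"
      using cont2 close(2)[OF st] by blast
    moreover have "\<bar>pds f [a, b] (pt \<sigma>' \<tau>') - pds f [a, b] th\<bar> < e"
      using cont1 close(1)[OF st'(2,1)] by blast
    moreover have "\<bar>pds f [a, b] th - pds f [b, a] th\<bar> = 2 * e" by (simp add: e_def)
    ultimately show False by linarith
  qed
qed simp

lemma inner_symmetric_matrix:
  fixes S :: "real^'k^'k"
  assumes "transpose S = S"
  shows "x \<bullet> (S *v y) = (S *v x) \<bullet> y"
  by (metis assms dot_lmul_matrix transpose_transpose vector_transpose_matrix)

lemma linear_coeff_eq_0_if_quadratic_nonneg:
  fixes b c :: real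
  assumes h: "\<And>t. 0 \<le> 2 * t * b + t * t * c"
  shows "b = 0"
proof (rule ccontr)
  assume b: "b \<noteq> 0"
  have c: "c \<ge> 0" using h[of 1] h[of "-1"] by simp
  define t where "t = - b / (c + 1)"
  have tc: "t * (c + 1) = - b" using c by (simp add: t_def)
  have "(c + 1) * (c + 1) * (2 * t * b + t * t * c) = 2 * b * (t * (c + 1)) * (c + 1) + (t * (c + 1)) * (t * (c + 1)) * c"
    by (simp add: algebra_simps)
  also have "\<dots> = - (b * b * (c + 2))" unfolding tc by (simp add: algebra_simps)
  also have "\<dots> < 0"
  proof -
    have "b * b > 0" using b not_real_square_gt_zero[of b] by linarith
    then show ?thesis using c by simp
  qed
  finally show False using h[of t] c by (smt (verit) mult_nonneg_nonneg)
qed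

lemma quadratic_form_attains_min_on_sphere:
  fixes S :: "real^'k^'k"
  obtains v0 where "v0 \<bullet> v0 = 1" "\<And>v. (v0 \<bullet> (S *v v0)) * (v \<bullet> v) \<le> v \<bullet> (S *v v)"
proof -
  let ?q = "\<lambda>v::real^'k. v \<bullet> (S *v v)"
  have cont: "continuous_on (sphere 0 1) ?q"
    by (intro continuous_intros linear_continuous_on matrix_vector_mul_linear)
  obtain i :: 'k where True by blast
  have "axis i 1 \<in> sphere (0::real^'k) 1" by simp
  then obtain v0 where v0: "v0 \<in> sphere 0 1" and min: "\<And>y. y \<in> sphere 0 1 \<Longrightarrow> ?q v0 \<le> ?q y"
    using continuous_attains_inf[OF compact_sphere _ cont] by blast
  have "?q v0 * (v \<bullet> v) \<le> ?q v" for v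
  proof (cases "v = 0")
    case False
    then have "?q v0 \<le> ?q ((1 / norm v) *\<^sub>R v)" by (intro min) simp
    then have "norm v * norm v * ?q v0 \<le> norm v * norm v * ?q ((1 / norm v) *\<^sub>R v)"
      by (rule mult_left_mono) simp
    also have "\<dots> = ?q v" using False by (simp add: matrix_vector_mult_scaleR)
    finally show ?thesis by (simp add: dot_square_norm power2_eq_square mult.commute)
  qed simp
  moreover have "v0 \<bullet> v0 = 1" using v0 by (simp add: dot_square_norm)
  ultimately show ?thesis using that by blast
qed

lemma eigenvector_if_min_quadratic_form:
  fixes S :: "real^'k^'k"
  assumes sym: "transpose S = S" and v0: "v0 \<bullet> v0 = 1" and \<mu>: "\<mu> = v0 \<bullet> (S *v v0)"
    and min: "\<And>v. \<mu> * (v \<bullet> v) \<le> v \<bullet> (S *v v)"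
  shows "S *v v0 = \<mu> *\<^sub>R v0"
proof -
  have "w \<bullet> (S *v v0 - \<mu> *\<^sub>R v0) = 0" for w
  proof (rule linear_coeff_eq_0_if_quadratic_nonneg[where c = "w \<bullet> (S *v w) - \<mu> * (w \<bullet> w)"])
    fix t :: real
    have "v0 \<bullet> (S *v w) = w \<bullet> (S *v v0)"
      using inner_symmetric_matrix[OF sym, of v0 w] by (simp add: inner_commute)
    then have "(v0 + t *\<^sub>R w) \<bullet> (S *v (v0 + t *\<^sub>R w)) - \<mu> * ((v0 + t *\<^sub>R w) \<bullet> (v0 + t *\<^sub>R w))
        = 2 * t * (w \<bullet> (S *v v0 - \<mu> *\<^sub>R v0)) + t * t * (w \<bullet> (S *v w) - \<mu> * (w \<bullet> w))"
      using v0 \<mu> by (simp add: inner_add_left inner_add_right inner_diff_right inner_commute[of v0 w]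
          matrix_vector_right_distrib matrix_vector_mult_scaleR algebra_simps)
    then show "0 \<le> 2 * t * (w \<bullet> (S *v v0 - \<mu> *\<^sub>R v0)) + t * t * (w \<bullet> (S *v w) - \<mu> * (w \<bullet> w))"
      using min[of "v0 + t *\<^sub>R w"] by linarith
  qed
  from this[of "S *v v0 - \<mu> *\<^sub>R v0"] show ?thesis by simp
qed

lemma symmetric_matrix_min_eigenvalue:
  fixes S :: "real^'k^'k"
  assumes "transpose S = S"
  obtains \<mu> v0 where "v0 \<noteq> 0" "S *v v0 = \<mu> *\<^sub>R v0" "\<And>v. \<mu> * (v \<bullet> v) \<le> v \<bullet> (S *v v)"
proof -
  obtain v0 where v0: "v0 \<bullet> v0 = 1" and min: "\<And>v. (v0 \<bullet> (S *v v0)) * (v \<bullet> v) \<le> v \<bullet> (S *v v)"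
    using quadratic_form_attains_min_on_sphere[of S] by blast
  have "S *v v0 = (v0 \<bullet> (S *v v0)) *\<^sub>R v0"
    using eigenvector_if_min_quadratic_form[OF assms v0 refl min] .
  moreover have "v0 \<noteq> 0" using v0 by auto
  ultimately show ?thesis using that min by blast
qed

lemma abs_det_le:
  fixes A :: "real^'k^'k"
  assumes "\<And>i j. \<bar>A $ i $ j\<bar> \<le> B"
  shows "\<bar>det A\<bar> \<le> real (card {p. p permutes (UNIV::'k set)}) * B ^ CARD('k)"
proof -
  have "\<bar>det A\<bar> \<le> (\<Sum>p\<in>{p. p permutes (UNIV::'k set)}. \<bar>of_int (sign p) * (\<Prod>i\<in>UNIV. A $ i $ p i)\<bar>)"
    unfolding det_def by (rule sum_abs)
  also have "\<dots> \<le> (\<Sum>p\<in>{p. p permutes (UNIV::'k set)}. B ^ CARD('k))"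
  proof (rule sum_mono)
    fix p :: "'k \<Rightarrow> 'k"
    have "\<bar>of_int (sign p) * (\<Prod>i\<in>UNIV. A $ i $ p i)\<bar> = (\<Prod>i\<in>UNIV. \<bar>A $ i $ p i\<bar>)"
      by (simp add: abs_mult sign_def abs_prod)
    also have "\<dots> \<le> (\<Prod>i\<in>(UNIV::'k set). B)" by (rule prod_mono) (use assms in auto)
    finally show "\<bar>of_int (sign p) * (\<Prod>i\<in>UNIV. A $ i $ p i)\<bar> \<le> B ^ CARD('k)" by simp
  qed
  finally show ?thesis by simp
qed

lemma det_scaleR: "det (c *\<^sub>R (A :: real^'k^'k)) = c ^ CARD('k) * det A"
  unfolding det_def by (simp add: prod.distrib sum_distrib_left algebra_simps)

lemma det_nonzero_if_ker_trivial:
  fixes A :: "real^'k^'k"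
  assumes "\<And>x. A *v x = 0 \<Longrightarrow> x = 0"
  shows "det A \<noteq> 0"
  using assms matrix_left_invertible_ker[of A] invertible_det_nz[of A]
  by (metis invertible_left_inverse)

lemma matrix_inv_if_det_nonzero:
  fixes A :: "real^'k^'k"
  assumes "det A \<noteq> 0"
  shows "matrix_inv A ** A = mat 1" "A ** matrix_inv A = mat 1"
proof -
  have "\<exists>A'. A ** A' = mat 1 \<and> A' ** A = mat 1"
    using assms invertible_det_nz[of A] unfolding invertible_def by simp
  then have "A ** matrix_inv A = mat 1 \<and> matrix_inv A ** A = mat 1"
    unfolding matrix_inv_def by (rule someI_ex)
  then show "matrix_inv A ** A = mat 1" "A ** matrix_inv A = mat 1" by auto
qed

lemma coercive_matrix_ker:
  fixes A :: "real^'k^'k"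
  assumes "\<And>x. \<mu> * (x \<bullet> x) \<le> x \<bullet> (A *v x)" "\<mu> > 0" "A *v x = 0"
  shows "x = 0"
  using assms(1)[of x] assms(2,3) by (simp add: mult_le_0_iff) (meson inner_gt_zero_iff not_le)

lemma coercive_matrix_solution_norm_le:
  fixes A :: "real^'k^'k"
  assumes pd: "\<And>x. \<mu> * (x \<bullet> x) \<le> x \<bullet> (A *v x)" and mu: "\<mu> > 0" and y: "A *v y = b"
  shows "norm y \<le> norm b / \<mu>"
proof -
  have "\<mu> * (norm y * norm y) \<le> y \<bullet> b" using pd[of y] y by (simp add: dot_square_norm power2_eq_square)
  also have "\<dots> \<le> norm y * norm b" by (rule Cauchy_Schwarz_ineq2[THEN order_trans[OF abs_ge_self]])
  finally have "norm y * (\<mu> * norm y) \<le> norm y * norm b" by (simp add: algebra_simps)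
  then have "\<mu> * norm y \<le> norm b" if "norm y > 0" using mult_left_le_imp_le that by blast
  then show ?thesis using mu by (cases "norm y > 0") (auto simp: field_simps)
qed

text \<open>A coercive matrix is joined to the identity by the coercive segment of matrices
  \<open>(1 - t) I + t A\<close>, whose determinant never vanishes.\<close>

lemma coercive_matrix_det_pos:
  fixes A :: "real^'k^'k"
  assumes pd: "\<And>x. \<mu> * (x \<bullet> x) \<le> x \<bullet> (A *v x)" and mu: "\<mu> > 0"
  shows "det A > 0"
proof (rule ccontr)
  assume "\<not> det A > 0"
  define B where "B t = (1 - t) *\<^sub>R mat 1 + t *\<^sub>R A" for t :: real
  have cont: "continuous_on {0..1} (\<lambda>t. det (B t))"
    unfolding det_def B_def by (intro continuous_intros)
  have "det (B 1) \<le> 0" "0 \<le> det (B 0)" using \<open>\<not> det A > 0\<close> by (auto simp: B_def)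
  then obtain t where t: "0 \<le> t" "t \<le> 1" "det (B t) = 0"
    using IVT2'[of "\<lambda>t. det (B t)" 1 0 0, OF _ _ _ cont] by auto
  have Bt: "min 1 \<mu> * (x \<bullet> x) \<le> x \<bullet> (B t *v x)" for x
  proof -
    have "x \<bullet> (B t *v x) = (1 - t) * (x \<bullet> x) + t * (x \<bullet> (A *v x))"
      by (simp add: B_def matrix_vector_mult_add_rdistrib scaleR_matrix_vector_assoc[symmetric] inner_add_right)
    moreover have "min 1 \<mu> * (x \<bullet> x) \<le> 1 * (x \<bullet> x)" by (intro mult_right_mono) auto
    then have "(1 - t) * (min 1 \<mu> * (x \<bullet> x)) \<le> (1 - t) * (x \<bullet> x)"
      using t by (intro mult_left_mono) auto
    moreover have "min 1 \<mu> * (x \<bullet> x) \<le> \<mu> * (x \<bullet> x)" by (intro mult_right_mono) auto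
    then have "t * (min 1 \<mu> * (x \<bullet> x)) \<le> t * (x \<bullet> (A *v x))"
      using t pd[of x] by (intro mult_left_mono) auto
    ultimately show ?thesis by (simp add: algebra_simps)
  qed
  have "det (B t) \<noteq> 0"
  proof (rule det_nonzero_if_ker_trivial)
    fix x assume "B t *v x = 0"
    then show "x = 0" using coercive_matrix_ker[OF Bt] mu by simp
  qed
  then show False using t by simp
qed

definition Op_sets :: "'a measure \<Rightarrow> (real \<Rightarrow> nat \<Rightarrow> 'a set) \<Rightarrow> bool" where
  "Op_sets M B \<longleftrightarrow> (\<forall>\<epsilon>>0. \<exists>C N. \<forall>n\<ge>N. \<exists>A\<in>sets M. B C n \<subseteq> A \<and> measure M A < \<epsilon>)"

lemma Op_iff_Op_sets: "Op M X a \<longleftrightarrow> Op_sets M (\<lambda>C n. {\<omega>\<in>space M. norm (X n \<omega>) > C * a n})"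
  by (simp add: Op_def Op_sets_def)

lemma Op_eig_iff_Op_sets:
  "Op_eig M A a \<longleftrightarrow> Op_sets M (\<lambda>C n. {\<omega>\<in>space M. \<exists>e. mat_eigenvalue (A n \<omega>) e \<and> \<bar>e\<bar> > C * a n})"
  by (simp add: Op_eig_def Op_sets_def)

lemma Op_sets_empty: "Op_sets M (\<lambda>C n. {})"
  unfolding Op_sets_def by (auto intro!: bexI[of _ "{}"])

lemma measure_UN_less:
  assumes "finite J" "\<And>j. j \<in> J \<Longrightarrow> A j \<in> sets M \<and> measure M (A j) < e"
  shows "measure M (\<Union>j\<in>J. A j) \<le> real (card J) * e"
proof -
  have "measure M (\<Union>j\<in>J. A j) \<le> (\<Sum>j\<in>J. measure M (A j))"
    using assms by (intro measure_UNION_le) auto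
  also have "\<dots> \<le> (\<Sum>j\<in>J. e)" using assms by (intro sum_mono) (simp add: less_imp_le)
  finally show ?thesis by simp
qed

lemma Op_sets_cover:
  assumes fin: "finite J" and small: "\<forall>j\<in>J. Op_sets M (B j)"
    and cover: "\<And>C. \<exists>C' N0. \<forall>n\<ge>N0. Bad C' n \<subseteq> (\<Union>j\<in>J. B j (C j) n)"
  shows "Op_sets M Bad"
  unfolding Op_sets_def
proof (intro allI impI)
  fix \<epsilon> :: real assume "\<epsilon> > 0"
  define e where "e = \<epsilon> / (real (card J) + 1)"
  have e: "e > 0" "real (card J) * e < \<epsilon>"
    using \<open>\<epsilon> > 0\<close> by (simp_all add: e_def field_simps)
  have "\<forall>j\<in>J. \<exists>CN. \<forall>n\<ge>snd CN. \<exists>A\<in>sets M. B j (fst CN) n \<subseteq> A \<and> measure M A < e"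
  proof
    fix j assume "j \<in> J"
    then obtain C N where "\<forall>n\<ge>N. \<exists>A\<in>sets M. B j C n \<subseteq> A \<and> measure M A < e"
      using small e unfolding Op_sets_def by blast
    then show "\<exists>CN. \<forall>n\<ge>snd CN. \<exists>A\<in>sets M. B j (fst CN) n \<subseteq> A \<and> measure M A < e"
      by (intro exI[of _ "(C, N)"]) simp
  qed
  from bchoice[OF this] obtain CN where CN: "\<And>j n. j \<in> J \<Longrightarrow> n \<ge> snd (CN j) \<Longrightarrow>
      \<exists>A\<in>sets M. B j (fst (CN j)) n \<subseteq> A \<and> measure M A < e"
    by blast
  obtain C' N0 where cov: "\<And>n. n \<ge> N0 \<Longrightarrow> Bad C' n \<subseteq> (\<Union>j\<in>J. B j (fst (CN j)) n)"
    using cover[of "\<lambda>j. fst (CN j)"] by blast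
  have "\<exists>A\<in>sets M. Bad C' n \<subseteq> A \<and> measure M A < \<epsilon>" if n: "n \<ge> N0 + (\<Sum>j\<in>J. snd (CN j))" for n
  proof -
    have "\<forall>j\<in>J. \<exists>A. A \<in> sets M \<and> B j (fst (CN j)) n \<subseteq> A \<and> measure M A < e"
    proof
      fix j assume "j \<in> J"
      have "snd (CN j) \<le> (\<Sum>j\<in>J. snd (CN j))" by (rule member_le_sum[OF \<open>j \<in> J\<close> _ fin]) auto
      then have "snd (CN j) \<le> n" using n by simp
      then show "\<exists>A. A \<in> sets M \<and> B j (fst (CN j)) n \<subseteq> A \<and> measure M A < e"
        using CN[OF \<open>j \<in> J\<close>] by (simp add: Bex_def)
    qed
    from bchoice[OF this] obtain A
      where A: "\<And>j. j \<in> J \<Longrightarrow> A j \<in> sets M \<and> B j (fst (CN j)) n \<subseteq> A j \<and> measure M (A j) < e"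
      by blast
    have "Bad C' n \<subseteq> (\<Union>j\<in>J. B j (fst (CN j)) n)" using cov n by simp
    then have "Bad C' n \<subseteq> (\<Union>j\<in>J. A j)" using A by blast
    moreover have "(\<Union>j\<in>J. A j) \<in> sets M" using A fin by auto
    moreover have "measure M (\<Union>j\<in>J. A j) \<le> real (card J) * e"
      using A by (intro measure_UN_less[OF fin]) blast
    ultimately show ?thesis using e by (meson le_less_trans)
  qed
  then show "\<exists>C N. \<forall>n\<ge>N. \<exists>A\<in>sets M. Bad C n \<subseteq> A \<and> measure M A < \<epsilon>" by blast
qed

lemma Op_of_bounds_outside:
  fixes X :: "nat \<Rightarrow> 'a \<Rightarrow> 'b::real_normed_vector" and Y :: "'j \<Rightarrow> nat \<Rightarrow> 'a \<Rightarrow> 'c::real_normed_vector"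
  assumes fin: "finite J" and Y: "\<forall>j\<in>J. Op M (Y j) (b j)" and E: "Op_sets M E"
    and bound: "\<And>C Ce. \<exists>C' N0. \<forall>n\<ge>N0. \<forall>\<omega>\<in>space M. (\<forall>j\<in>J. norm (Y j n \<omega>) \<le> C j * b j n) \<longrightarrow>
        \<omega> \<notin> E Ce n \<longrightarrow> norm (X n \<omega>) \<le> C' * a n"
  shows "Op M X a"
  unfolding Op_iff_Op_sets
proof (rule Op_sets_cover[where J = "insert None (Some ` J)"
      and B = "\<lambda>jo C n. case jo of None \<Rightarrow> E C n | Some j \<Rightarrow> {\<omega> \<in> space M. C * b j n < norm (Y j n \<omega>)}"])
  show "finite (insert None (Some ` J))" using fin by simp
  show "\<forall>j\<in>insert None (Some ` J). Op_sets M (\<lambda>C n. case j of None \<Rightarrow> E C n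
      | Some j \<Rightarrow> {\<omega> \<in> space M. C * b j n < norm (Y j n \<omega>)})"
    using Y E by (auto simp: Op_iff_Op_sets)
  fix C :: "'j option \<Rightarrow> real"
  obtain C' N0 where H: "\<And>n \<omega>. n \<ge> N0 \<Longrightarrow> \<omega> \<in> space M \<Longrightarrow> (\<forall>j\<in>J. norm (Y j n \<omega>) \<le> C (Some j) * b j n) \<Longrightarrow>
      \<omega> \<notin> E (C None) n \<Longrightarrow> norm (X n \<omega>) \<le> C' * a n"
    using bound[of "\<lambda>j. C (Some j)" "C None"] by blast
  show "\<exists>C' N0. \<forall>n\<ge>N0. {\<omega> \<in> space M. C' * a n < norm (X n \<omega>)} \<subseteq>
     (\<Union>j\<in>insert None (Some ` J). case j of None \<Rightarrow> E (C j) n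
       | Some ja \<Rightarrow> {\<omega> \<in> space M. C j * b ja n < norm (Y ja n \<omega>)})"
    using H by (intro exI[of _ C'] exI[of _ N0]) (force simp: not_less)
qed

lemma Op_of_bounds:
  fixes X :: "nat \<Rightarrow> 'a \<Rightarrow> 'b::real_normed_vector" and Y :: "'j \<Rightarrow> nat \<Rightarrow> 'a \<Rightarrow> 'c::real_normed_vector"
  assumes "finite J" "\<forall>j\<in>J. Op M (Y j) (b j)"
    and "\<And>C. \<exists>C' N0. \<forall>n\<ge>N0. \<forall>\<omega>\<in>space M. (\<forall>j\<in>J. norm (Y j n \<omega>) \<le> C j * b j n) \<longrightarrow>
        norm (X n \<omega>) \<le> C' * a n"
  shows "Op M X a"
  using assms by (intro Op_of_bounds_outside[OF _ _ Op_sets_empty]) auto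

lemma Op_of_bound:
  fixes X :: "nat \<Rightarrow> 'a \<Rightarrow> 'b::real_normed_vector" and Y :: "nat \<Rightarrow> 'a \<Rightarrow> 'c::real_normed_vector"
  assumes "Op M Y b"
    and "\<And>C. \<exists>C' N0. \<forall>n\<ge>N0. \<forall>\<omega>\<in>space M. norm (Y n \<omega>) \<le> C * b n \<longrightarrow> norm (X n \<omega>) \<le> C' * a n"
  shows "Op M X a"
  using assms by (intro Op_of_bounds[where J = "{()}" and Y = "\<lambda>_. Y" and b = "\<lambda>_. b"]) auto

lemma Op_zero: "Op M (\<lambda>n \<omega>. 0) a"
  unfolding Op_def by (auto intro!: exI[of _ 0] bexI[of _ "{}"])

lemma Op_const: "Op M (\<lambda>n \<omega>. c) (\<lambda>n. 1)"
  unfolding Op_def by (auto intro!: exI[of _ "norm c"] bexI[of _ "{}"])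

lemma Op_cong:
  assumes "Op M Y a" "\<And>n \<omega>. 1 \<le> n \<Longrightarrow> \<omega> \<in> space M \<Longrightarrow> X n \<omega> = Y n \<omega>"
  shows "Op M X a"
proof (rule Op_of_bound[OF assms(1)])
  fix C
  show "\<exists>C' N0. \<forall>n\<ge>N0. \<forall>\<omega>\<in>space M. norm (Y n \<omega>) \<le> C * a n \<longrightarrow> norm (X n \<omega>) \<le> C' * a n"
    using assms(2) by (intro exI[of _ C] exI[of _ 1]) auto
qed

lemma Op_add:
  fixes X Y :: "nat \<Rightarrow> 'a \<Rightarrow> 'b::real_normed_vector"
  assumes "Op M X (\<lambda>n. 1)" "Op M Y (\<lambda>n. 1)"
  shows "Op M (\<lambda>n \<omega>. X n \<omega> + Y n \<omega>) (\<lambda>n. 1)"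
proof (rule Op_of_bounds[where J = UNIV and Y = "\<lambda>b. if b then X else Y" and b = "\<lambda>_ _. 1"])
  fix C :: "bool \<Rightarrow> real"
  have "norm (X n \<omega> + Y n \<omega>) \<le> (C True + C False) * 1"
    if "\<forall>j. norm ((if j then X else Y) n \<omega>) \<le> C j * 1" for n \<omega>
    using that[rule_format, of True] that[rule_format, of False] norm_triangle_ineq[of "X n \<omega>" "Y n \<omega>"]
    by simp
  then show "\<exists>C' N0. \<forall>n\<ge>N0. \<forall>\<omega>\<in>space M. (\<forall>j\<in>UNIV. norm ((if j then X else Y) n \<omega>) \<le> C j * 1) \<longrightarrow>
      norm (X n \<omega> + Y n \<omega>) \<le> C' * 1"
    by (intro exI[of _ "C True + C False"] exI[of _ 0]) simp
qed (use assms in auto)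

lemma Op_mult:
  fixes X Y :: "nat \<Rightarrow> 'a \<Rightarrow> real"
  assumes "Op M X (\<lambda>n. 1)" "Op M Y (\<lambda>n. 1)"
  shows "Op M (\<lambda>n \<omega>. X n \<omega> * Y n \<omega>) (\<lambda>n. 1)"
proof (rule Op_of_bounds[where J = UNIV and Y = "\<lambda>b. if b then X else Y" and b = "\<lambda>_ _. 1"])
  fix C :: "bool \<Rightarrow> real"
  have "norm (X n \<omega> * Y n \<omega>) \<le> (\<bar>C True\<bar> * \<bar>C False\<bar>) * 1"
    if "\<forall>j. norm ((if j then X else Y) n \<omega>) \<le> C j * 1" for n \<omega>
    using that[rule_format, of True] that[rule_format, of False]
    by (simp add: abs_mult mult_mono')
  then show "\<exists>C' N0. \<forall>n\<ge>N0. \<forall>\<omega>\<in>space M. (\<forall>j\<in>UNIV. norm ((if j then X else Y) n \<omega>) \<le> C j * 1) \<longrightarrow>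
      norm (X n \<omega> * Y n \<omega>) \<le> C' * 1"
    by (intro exI[of _ "\<bar>C True\<bar> * \<bar>C False\<bar>"] exI[of _ 0]) simp
qed (use assms in auto)

lemma Op_vec:
  fixes X :: "'k::finite \<Rightarrow> nat \<Rightarrow> 'a \<Rightarrow> 'b::real_normed_vector"
  assumes "\<And>i. Op M (X i) a"
  shows "Op M (\<lambda>n \<omega>. \<chi> i. X i n \<omega>) a"
proof (rule Op_of_bounds[where J = UNIV and Y = X and b = "\<lambda>_. a"])
  fix C :: "'k \<Rightarrow> real"
  show "\<exists>C' N0. \<forall>n\<ge>N0. \<forall>\<omega>\<in>space M. (\<forall>j\<in>UNIV. norm (X j n \<omega>) \<le> C j * a n) \<longrightarrow>
      norm (\<chi> i. X i n \<omega>) \<le> C' * a n"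
  proof (intro exI[of _ "\<Sum>j\<in>UNIV. C j"] exI[of _ 0] allI impI ballI)
    fix n \<omega> assume bounds: "\<forall>j\<in>UNIV. norm (X j n \<omega>) \<le> C j * a n"
    have "norm (\<chi> i. X i n \<omega>) \<le> (\<Sum>i\<in>UNIV. norm (X i n \<omega>))"
      using L2_set_le_sum[of UNIV "\<lambda>i. norm (X i n \<omega>)"] by (simp add: norm_vec_def)
    also have "\<dots> \<le> (\<Sum>i\<in>UNIV. C i * a n)" using bounds by (intro sum_mono) auto
    finally show "norm (\<chi> i. X i n \<omega>) \<le> (\<Sum>j\<in>UNIV. C j) * a n" by (simp add: sum_distrib_right)
  qed
qed (use assms in auto)

lemma Op_scale_real_n:
  fixes X :: "nat \<Rightarrow> 'a \<Rightarrow> 'b::real_normed_vector" and Y :: "nat \<Rightarrow> 'a \<Rightarrow> 'c::real_normed_vector"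
  assumes "Op M Y (\<lambda>n. 1)" and "\<And>n \<omega>. 1 \<le> n \<Longrightarrow> \<omega> \<in> space M \<Longrightarrow> norm (X n \<omega>) \<le> real n * norm (Y n \<omega>)"
  shows "Op M X (\<lambda>n. real n)"
proof (rule Op_of_bound[OF assms(1)])
  fix C
  have "norm (X n \<omega>) \<le> C * real n" if "1 \<le> n" "\<omega> \<in> space M" "norm (Y n \<omega>) \<le> C * 1" for n \<omega>
    using assms(2)[OF that(1,2)] mult_left_mono[OF that(3), of "real n"] by (simp add: mult.commute)
  then show "\<exists>C' N0. \<forall>n\<ge>N0. \<forall>\<omega>\<in>space M. norm (Y n \<omega>) \<le> C * 1 \<longrightarrow> norm (X n \<omega>) \<le> C' * real n"
    by (intro exI[of _ C] exI[of _ 1]) simp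
qed

lemma sum_mem_closed:
  assumes "\<And>c. (\<lambda>n \<omega> \<psi>. c) \<in> S"
    and "\<And>G H. G \<in> S \<Longrightarrow> H \<in> S \<Longrightarrow> (\<lambda>n \<omega> \<psi>. G n \<omega> \<psi> + H n \<omega> \<psi>) \<in> S"
    and "finite A" "\<And>x. x \<in> A \<Longrightarrow> F x \<in> S"
  shows "(\<lambda>n \<omega> \<psi>. \<Sum>x\<in>A. F x n \<omega> \<psi>) \<in> S"
  using assms(3,4)
proof (induction A rule: finite_induct)
  case empty then show ?case using assms(1)[of 0] by simp
next
  case (insert x A)
  then have "(\<lambda>n \<omega> \<psi>. F x n \<omega> \<psi> + (\<Sum>x\<in>A. F x n \<omega> \<psi>)) \<in> S" by (intro assms(2)) auto
  then show ?case using insert.hyps by simp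
qed

lemma prod_mem_closed:
  assumes "\<And>c. (\<lambda>n \<omega> \<psi>. c) \<in> S"
    and "\<And>G H. G \<in> S \<Longrightarrow> H \<in> S \<Longrightarrow> (\<lambda>n \<omega> \<psi>. G n \<omega> \<psi> * H n \<omega> \<psi>) \<in> S"
    and "finite A" "\<And>x. x \<in> A \<Longrightarrow> F x \<in> S"
  shows "(\<lambda>n \<omega> \<psi>. \<Prod>x\<in>A. F x n \<omega> \<psi>) \<in> S"
  using assms(3,4)
proof (induction A rule: finite_induct)
  case empty then show ?case using assms(1)[of 1] by simp
next
  case (insert x A)
  then have "(\<lambda>n \<omega> \<psi>. F x n \<omega> \<psi> * (\<Prod>x\<in>A. F x n \<omega> \<psi>)) \<in> S" by (intro assms(2)) auto
  then show ?case using insert.hyps by simp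
qed

lemma det_mem_closed:
  fixes E :: "'k::finite \<Rightarrow> 'k \<Rightarrow> 'x \<Rightarrow> 'y \<Rightarrow> 'z \<Rightarrow> real"
  assumes c: "\<And>c. (\<lambda>n \<omega> \<psi>. c) \<in> S"
    and a: "\<And>G H. G \<in> S \<Longrightarrow> H \<in> S \<Longrightarrow> (\<lambda>n \<omega> \<psi>. G n \<omega> \<psi> + H n \<omega> \<psi>) \<in> S"
    and m: "\<And>G H. G \<in> S \<Longrightarrow> H \<in> S \<Longrightarrow> (\<lambda>n \<omega> \<psi>. G n \<omega> \<psi> * H n \<omega> \<psi>) \<in> S"
    and E: "\<And>i j. E i j \<in> S"
  shows "(\<lambda>n \<omega> \<psi>. det (\<chi> i j. E i j n \<omega> \<psi>)) \<in> S"
proof -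
  have "(\<lambda>n \<omega> \<psi>. \<Sum>p\<in>{p. p permutes (UNIV::'k set)}.
      (\<lambda>n \<omega> \<psi>. of_int (sign p) * (\<Prod>i\<in>UNIV. E i (p i) n \<omega> \<psi>)) n \<omega> \<psi>) \<in> S"
  proof (rule sum_mem_closed[OF c a])
    fix p :: "'k \<Rightarrow> 'k"
    have "(\<lambda>n \<omega> \<psi>. \<Prod>i\<in>UNIV. E i (p i) n \<omega> \<psi>) \<in> S" by (rule prod_mem_closed[OF c m]) (auto intro: E)
    then show "(\<lambda>n \<omega> \<psi>. of_int (sign p) * (\<Prod>i\<in>UNIV. E i (p i) n \<omega> \<psi>)) \<in> S"
      using m[OF c] by blast
  qed (auto intro: finite_permutations)
  then show ?thesis unfolding det_def by simp
qed

lemma deriv_eqI_on_open: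
  fixes g h :: "real \<Rightarrow> real"
  assumes "open W" "x \<in> W" "\<And>y. y \<in> W \<Longrightarrow> g y = h y" "(h has_real_derivative D) (at x)"
  shows "deriv g x = D"
  by (rule DERIV_imp_deriv, rule has_field_derivative_transform_within_open[OF assms(4,1,2)])
    (use assms(3) in auto)

lemma funpow_deriv_Suc: "(deriv ^^ Suc k) f = (deriv ^^ k) (deriv f)"
  by (simp only: funpow_Suc_right comp_def)

locale profile_likelihood =
  fixes M :: "'a measure"
    and l :: "nat \<Rightarrow> 'a \<Rightarrow> real \<times> (real^'m) \<Rightarrow> real"
    and psihat :: "nat \<Rightarrow> 'a \<Rightarrow> real"
    and lamhat :: "nat \<Rightarrow> 'a \<Rightarrow> real \<Rightarrow> real^'m"
  assumes smooth: "\<forall>n. \<forall>\<omega>\<in>space M. smooth_fun (l n \<omega>)"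
    and prof_max: "\<forall>n. \<forall>\<omega>\<in>space M. \<forall>psi lam. l n \<omega> (psi, lam) \<le> l n \<omega> (psi, lamhat n \<omega> psi)"
    and mle: "\<forall>n. \<forall>\<omega>\<in>space M. \<forall>th. l n \<omega> th \<le> l n \<omega> (psihat n \<omega>, lamhat n \<omega> (psihat n \<omega>))"
    and prof_smooth: "\<forall>n. \<forall>\<omega>\<in>space M. \<exists>U. open U \<and> psihat n \<omega> \<in> U \<and>
        (\<forall>i k. \<forall>psi\<in>U. (deriv ^^ k) (\<lambda>t. lamhat n \<omega> t $ i) differentiable (at psi))"
begin

text \<open>For \<open>n = 0\<close> the division by \<open>real 0 = 0\<close> makes \<open>scaled_pds\<close> vanish, hence the side
  conditions \<open>1 \<le> n\<close> below.\<close>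

definition scaled_pds :: "'m option list \<Rightarrow> nat \<Rightarrow> 'a \<Rightarrow> real \<Rightarrow> real" where
  "scaled_pds js n \<omega> \<psi> = pds (l n \<omega>) js (\<psi>, lamhat n \<omega> \<psi>) / real n"

definition Jll :: "nat \<Rightarrow> 'a \<Rightarrow> real \<Rightarrow> real^'m^'m" where
  "Jll n \<omega> \<psi> = (\<chi> i k. - scaled_pds [Some i, Some k] n \<omega> \<psi>)"

definition det_Jll :: "nat \<Rightarrow> 'a \<Rightarrow> real \<Rightarrow> real" where
  "det_Jll n \<omega> \<psi> = det (Jll n \<omega> \<psi>)"

definition inv_det_Jll :: "nat \<Rightarrow> 'a \<Rightarrow> real \<Rightarrow> real" where
  "inv_det_Jll n \<omega> \<psi> = 1 / det_Jll n \<omega> \<psi>"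

definition dlamhat :: "'m \<Rightarrow> nat \<Rightarrow> 'a \<Rightarrow> real \<Rightarrow> real" where
  "dlamhat i n \<omega> \<psi> = deriv (\<lambda>t. lamhat n \<omega> t $ i) \<psi>"

definition cramer_dlamhat :: "'m \<Rightarrow> nat \<Rightarrow> 'a \<Rightarrow> real \<Rightarrow> real" where
  "cramer_dlamhat i n \<omega> \<psi> =
    det (\<chi> a b. if b = i then scaled_pds [None, Some a] n \<omega> \<psi> else Jll n \<omega> \<psi> $ b $ a) * inv_det_Jll n \<omega> \<psi>"

definition nbhd :: "nat \<Rightarrow> 'a \<Rightarrow> real set" where
  "nbhd n \<omega> = (SOME U. open U \<and> psihat n \<omega> \<in> U \<and>
        (\<forall>i k. \<forall>psi\<in>U. (deriv ^^ k) (\<lambda>t. lamhat n \<omega> t $ i) differentiable (at psi)))"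

definition regular :: "nat \<Rightarrow> 'a \<Rightarrow> real set" where
  "regular n \<omega> = nbhd n \<omega> \<inter> {\<psi>. det_Jll n \<omega> \<psi> > 0}"

lemma regularD: "\<psi> \<in> regular n \<omega> \<Longrightarrow> \<psi> \<in> nbhd n \<omega>" "\<psi> \<in> regular n \<omega> \<Longrightarrow> det_Jll n \<omega> \<psi> > 0"
  by (auto simp: regular_def)

lemma smooth_l: "\<omega> \<in> space M \<Longrightarrow> smooth_fun (l n \<omega>)"
  using smooth by blast

lemma nbhd_spec:
  assumes "\<omega> \<in> space M"
  shows "open (nbhd n \<omega>)" "psihat n \<omega> \<in> nbhd n \<omega>"
    "\<And>i k psi. psi \<in> nbhd n \<omega> \<Longrightarrow> (deriv ^^ k) (\<lambda>t. lamhat n \<omega> t $ i) differentiable (at psi)"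
proof -
  have "open (nbhd n \<omega>) \<and> psihat n \<omega> \<in> nbhd n \<omega> \<and>
        (\<forall>i k. \<forall>psi\<in>nbhd n \<omega>. (deriv ^^ k) (\<lambda>t. lamhat n \<omega> t $ i) differentiable (at psi))"
    unfolding nbhd_def by (rule someI_ex) (use prof_smooth assms in blast)
  then show "open (nbhd n \<omega>)" "psihat n \<omega> \<in> nbhd n \<omega>"
    "\<And>i k psi. psi \<in> nbhd n \<omega> \<Longrightarrow> (deriv ^^ k) (\<lambda>t. lamhat n \<omega> t $ i) differentiable (at psi)"
    by auto
qed

lemma lamhat_has_derivative:
  assumes "\<omega> \<in> space M" "\<psi> \<in> nbhd n \<omega>"
  shows "((\<lambda>t. lamhat n \<omega> t $ i) has_real_derivative dlamhat i n \<omega> \<psi>) (at \<psi>)"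
  using nbhd_spec(3)[OF assms, where i = i and k = 0] by (simp add: dlamhat_def DERIV_deriv_iff_real_differentiable)

lemma scaled_pds_has_derivative:
  assumes "\<omega> \<in> space M" "\<psi> \<in> nbhd n \<omega>"
  shows "(scaled_pds js n \<omega> has_real_derivative
    scaled_pds (None # js) n \<omega> \<psi> + (\<Sum>i\<in>UNIV. scaled_pds (Some i # js) n \<omega> \<psi> * dlamhat i n \<omega> \<psi>)) (at \<psi>)"
proof -
  have "((\<lambda>t. pds (l n \<omega>) js (t, lamhat n \<omega> t)) has_real_derivative
     pd (pds (l n \<omega>) js) None (\<psi>, lamhat n \<omega> \<psi>)
       + (\<Sum>i\<in>UNIV. pd (pds (l n \<omega>) js) (Some i) (\<psi>, lamhat n \<omega> \<psi>) * (\<chi> i. dlamhat i n \<omega> \<psi>) $ i)) (at \<psi>)"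
    by (rule smooth_fun_has_derivative_along_curve[OF smooth_fun_pds[OF smooth_l[OF assms(1)]]])
      (simp add: lamhat_has_derivative[OF assms])
  from DERIV_cdivide[OF this, of "real n"] show ?thesis
    by (simp add: scaled_pds_def[abs_def] add_divide_distrib sum_divide_distrib)
qed

lemma scaled_pds_commute:
  "\<omega> \<in> space M \<Longrightarrow> scaled_pds [a, b] n \<omega> \<psi> = scaled_pds [b, a] n \<omega> \<psi>"
  unfolding scaled_pds_def using pds_commute[OF smooth_l, of \<omega> n a b] by simp

lemma pds_nuisance_eq_0:
  assumes "\<omega> \<in> space M"
  shows "pds (l n \<omega>) [Some i] (t, lamhat n \<omega> t) = 0"
proof -
  have "l n \<omega> (upd (t, lamhat n \<omega> t) (Some i) s) \<le> l n \<omega> (t, lamhat n \<omega> t)" for s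
    using prof_max assms by (simp add: upd_def)
  then show ?thesis using pd_eq_0_at_max[OF smooth_l[OF assms]] by simp
qed

lemma Jll_dlamhat_eq:
  assumes "\<omega> \<in> space M" "\<psi> \<in> nbhd n \<omega>"
  shows "(\<Sum>k\<in>UNIV. Jll n \<omega> \<psi> $ k $ a * dlamhat k n \<omega> \<psi>) = scaled_pds [None, Some a] n \<omega> \<psi>"
proof -
  have "scaled_pds [Some a] n \<omega> = (\<lambda>t. 0)"
    by (rule ext) (simp add: scaled_pds_def pds_nuisance_eq_0[OF assms(1), simplified])
  then have "(scaled_pds [Some a] n \<omega> has_real_derivative 0) (at \<psi>)" by simp
  with scaled_pds_has_derivative[OF assms, of "[Some a]"]
  have "scaled_pds [None, Some a] n \<omega> \<psi> + (\<Sum>i\<in>UNIV. scaled_pds [Some i, Some a] n \<omega> \<psi> * dlamhat i n \<omega> \<psi>) = 0"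
    by (rule DERIV_unique)
  then show ?thesis by (simp add: Jll_def sum_negf)
qed

lemma dlamhat_eq_cramer:
  assumes "\<omega> \<in> space M" "\<psi> \<in> nbhd n \<omega>" "det_Jll n \<omega> \<psi> \<noteq> 0"
  shows "dlamhat i n \<omega> \<psi> = cramer_dlamhat i n \<omega> \<psi>"
proof -
  let ?A = "transpose (Jll n \<omega> \<psi>)"
  let ?p = "\<chi> a. scaled_pds [None, Some a] n \<omega> \<psi>"
  have "?A *v (\<chi> k. dlamhat k n \<omega> \<psi>) = ?p"
    using Jll_dlamhat_eq[OF assms(1,2)]
    by (simp add: vec_eq_iff matrix_vector_mult_def Finite_Cartesian_Product.transpose_def)
  moreover have "det ?A \<noteq> 0" using assms(3) by (simp add: det_Jll_def)
  ultimately have "(\<chi> k. dlamhat k n \<omega> \<psi>) = (\<chi> k. det (\<chi> a b. if b = k then ?p $ a else ?A $ a $ b) / det ?A)"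
    using cramer by blast
  then have "dlamhat i n \<omega> \<psi> = det (\<chi> a b. if b = i then ?p $ a else ?A $ a $ b) / det ?A"
    by (simp add: vec_eq_iff)
  also have "(\<chi> a b. if b = i then ?p $ a else ?A $ a $ b)
      = (\<chi> a b. if b = i then scaled_pds [None, Some a] n \<omega> \<psi> else Jll n \<omega> \<psi> $ b $ a)"
    by (simp add: vec_eq_iff Finite_Cartesian_Product.transpose_def)
  finally show ?thesis by (simp add: cramer_dlamhat_def inv_det_Jll_def det_Jll_def det_transpose)
qed

end

context profile_likelihood
begin

text \<open>First-order partials are left out because (A1) only controls partials of order at least two;
  differentiating along the profile curve never produces them.\<close>

inductive_set poly_alg :: "(nat \<Rightarrow> 'a \<Rightarrow> real \<Rightarrow> real) set" where
  poly_pds: "2 \<le> length js \<Longrightarrow> scaled_pds js \<in> poly_alg"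
| poly_const: "(\<lambda>n \<omega> \<psi>. c) \<in> poly_alg"
| poly_add: "G \<in> poly_alg \<Longrightarrow> H \<in> poly_alg \<Longrightarrow> (\<lambda>n \<omega> \<psi>. G n \<omega> \<psi> + H n \<omega> \<psi>) \<in> poly_alg"
| poly_mult: "G \<in> poly_alg \<Longrightarrow> H \<in> poly_alg \<Longrightarrow> (\<lambda>n \<omega> \<psi>. G n \<omega> \<psi> * H n \<omega> \<psi>) \<in> poly_alg"

inductive_set rat_alg :: "(nat \<Rightarrow> 'a \<Rightarrow> real \<Rightarrow> real) set" where
  rat_pds: "2 \<le> length js \<Longrightarrow> scaled_pds js \<in> rat_alg"
| rat_inv_det: "inv_det_Jll \<in> rat_alg"
| rat_const: "(\<lambda>n \<omega> \<psi>. c) \<in> rat_alg"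
| rat_add: "G \<in> rat_alg \<Longrightarrow> H \<in> rat_alg \<Longrightarrow> (\<lambda>n \<omega> \<psi>. G n \<omega> \<psi> + H n \<omega> \<psi>) \<in> rat_alg"
| rat_mult: "G \<in> rat_alg \<Longrightarrow> H \<in> rat_alg \<Longrightarrow> (\<lambda>n \<omega> \<psi>. G n \<omega> \<psi> * H n \<omega> \<psi>) \<in> rat_alg"

lemma poly_alg_subset_rat_alg: "G \<in> poly_alg \<Longrightarrow> G \<in> rat_alg"
  by (induction rule: poly_alg.induct) (auto intro: rat_alg.intros)

lemma poly_alg_uminus_pds: "2 \<le> length js \<Longrightarrow> (\<lambda>n \<omega> \<psi>. - scaled_pds js n \<omega> \<psi>) \<in> poly_alg"
  using poly_mult[OF poly_const[of "-1"] poly_pds[of js]] by simp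

lemma rat_alg_sum: "finite A \<Longrightarrow> (\<And>x. x \<in> A \<Longrightarrow> F x \<in> rat_alg) \<Longrightarrow> (\<lambda>n \<omega> \<psi>. \<Sum>x\<in>A. F x n \<omega> \<psi>) \<in> rat_alg"
  by (rule sum_mem_closed) (auto intro: rat_alg.intros)

lemma det_Jll_poly_alg: "det_Jll \<in> poly_alg"
proof -
  have "(\<lambda>n \<omega> \<psi>. det (\<chi> i j. (\<lambda>i j n \<omega> \<psi>. - scaled_pds [Some i, Some j] n \<omega> \<psi>) i j n \<omega> \<psi>)) \<in> poly_alg"
    by (rule det_mem_closed) (auto intro: poly_alg.intros poly_alg_uminus_pds)
  then show ?thesis by (simp add: det_Jll_def[abs_def] Jll_def)
qed

lemma cramer_dlamhat_rat_alg: "cramer_dlamhat i \<in> rat_alg"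
proof -
  let ?E = "\<lambda>a b. if b = i then scaled_pds [None, Some a] else (\<lambda>n \<omega> \<psi>. - scaled_pds [Some b, Some a] n \<omega> \<psi>)"
  have "(\<lambda>n \<omega> \<psi>. det (\<chi> a b. ?E a b n \<omega> \<psi>)) \<in> poly_alg"
    by (rule det_mem_closed) (auto intro: poly_alg.intros poly_alg_uminus_pds)
  then have "(\<lambda>n \<omega> \<psi>. det (\<chi> a b. ?E a b n \<omega> \<psi>) * inv_det_Jll n \<omega> \<psi>) \<in> rat_alg"
    by (intro rat_mult rat_inv_det poly_alg_subset_rat_alg)
  moreover have "(\<chi> a b. ?E a b n \<omega> \<psi>)
      = (\<chi> a b. if b = i then scaled_pds [None, Some a] n \<omega> \<psi> else Jll n \<omega> \<psi> $ b $ a)" for n \<omega> \<psi>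
    by (simp add: vec_eq_iff Jll_def)
  ultimately show ?thesis by (simp add: cramer_dlamhat_def[abs_def])
qed

lemma poly_alg_isCont: "G \<in> poly_alg \<Longrightarrow> \<omega> \<in> space M \<Longrightarrow> \<psi> \<in> nbhd n \<omega> \<Longrightarrow> isCont (G n \<omega>) \<psi>"
proof (induction rule: poly_alg.induct)
  case (poly_pds js) then show ?case using scaled_pds_has_derivative DERIV_isCont by blast
qed auto

lemma open_regular: "\<omega> \<in> space M \<Longrightarrow> open (regular n \<omega>)"
proof -
  assume w: "\<omega> \<in> space M"
  have "continuous_on (nbhd n \<omega>) (det_Jll n \<omega>)"
    using poly_alg_isCont[OF det_Jll_poly_alg w] by (intro continuous_at_imp_continuous_on) auto
  then have "open (det_Jll n \<omega> -` {0<..} \<inter> nbhd n \<omega>)"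
    using continuous_on_open_vimage[OF nbhd_spec(1)[OF w], where f = "det_Jll n \<omega>"] open_greaterThan by blast
  moreover have "det_Jll n \<omega> -` {0<..} \<inter> nbhd n \<omega> = regular n \<omega>" by (auto simp: regular_def)
  ultimately show ?thesis by simp
qed

definition has_deriv_on_regular :: "(nat \<Rightarrow> 'a \<Rightarrow> real \<Rightarrow> real) \<Rightarrow> (nat \<Rightarrow> 'a \<Rightarrow> real \<Rightarrow> real) \<Rightarrow> bool" where
  "has_deriv_on_regular G H \<longleftrightarrow>
    (\<forall>n \<omega> \<psi>. \<omega> \<in> space M \<longrightarrow> \<psi> \<in> regular n \<omega> \<longrightarrow> (G n \<omega> has_real_derivative H n \<omega> \<psi>) (at \<psi>))"

lemma has_deriv_on_regular_const: "has_deriv_on_regular (\<lambda>n \<omega> \<psi>. c) (\<lambda>n \<omega> \<psi>. 0)"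
  and has_deriv_on_regular_add: "has_deriv_on_regular G G' \<Longrightarrow> has_deriv_on_regular H H' \<Longrightarrow>
    has_deriv_on_regular (\<lambda>n \<omega> \<psi>. G n \<omega> \<psi> + H n \<omega> \<psi>) (\<lambda>n \<omega> \<psi>. G' n \<omega> \<psi> + H' n \<omega> \<psi>)"
  and has_deriv_on_regular_mult: "has_deriv_on_regular G G' \<Longrightarrow> has_deriv_on_regular H H' \<Longrightarrow>
    has_deriv_on_regular (\<lambda>n \<omega> \<psi>. G n \<omega> \<psi> * H n \<omega> \<psi>) (\<lambda>n \<omega> \<psi>. G' n \<omega> \<psi> * H n \<omega> \<psi> + H' n \<omega> \<psi> * G n \<omega> \<psi>)"
  by (auto simp: has_deriv_on_regular_def intro!: DERIV_add DERIV_mult)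

lemma scaled_pds_has_deriv_on_regular:
  "has_deriv_on_regular (scaled_pds js)
    (\<lambda>n \<omega> \<psi>. scaled_pds (None # js) n \<omega> \<psi> + (\<Sum>i\<in>UNIV. scaled_pds (Some i # js) n \<omega> \<psi> * cramer_dlamhat i n \<omega> \<psi>))"
  unfolding has_deriv_on_regular_def
proof (intro allI impI)
  fix n \<omega> \<psi> assume w: "\<omega> \<in> space M" and p: "\<psi> \<in> regular n \<omega>"
  have "dlamhat i n \<omega> \<psi> = cramer_dlamhat i n \<omega> \<psi>" for i
    using dlamhat_eq_cramer[OF w regularD(1)[OF p]] regularD(2)[OF p] by simp
  then show "(scaled_pds js n \<omega> has_real_derivative scaled_pds (None # js) n \<omega> \<psi>
      + (\<Sum>i\<in>UNIV. scaled_pds (Some i # js) n \<omega> \<psi> * cramer_dlamhat i n \<omega> \<psi>)) (at \<psi>)"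
    using scaled_pds_has_derivative[OF w regularD(1)[OF p], of js] by simp
qed

lemma poly_alg_deriv: "G \<in> poly_alg \<Longrightarrow> \<exists>H\<in>rat_alg. has_deriv_on_regular G H"
proof (induction rule: poly_alg.induct)
  case (poly_pds js)
  then have "(\<lambda>n \<omega> \<psi>. scaled_pds (None # js) n \<omega> \<psi> + (\<Sum>i\<in>UNIV. scaled_pds (Some i # js) n \<omega> \<psi> * cramer_dlamhat i n \<omega> \<psi>))
      \<in> rat_alg"
    by (intro rat_add rat_pds rat_alg_sum rat_mult cramer_dlamhat_rat_alg) auto
  then show ?case using scaled_pds_has_deriv_on_regular by blast
next
  case (poly_const c)
  show ?case using has_deriv_on_regular_const rat_const by blast
next
  case (poly_add G H)
  then obtain G' H' where G': "G' \<in> rat_alg" "has_deriv_on_regular G G'"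
    and H': "H' \<in> rat_alg" "has_deriv_on_regular H H'"
    by blast
  show ?case using has_deriv_on_regular_add[OF G'(2) H'(2)] rat_add[OF G'(1) H'(1)] by blast
next
  case (poly_mult G H)
  then obtain G' H' where G': "G' \<in> rat_alg" "has_deriv_on_regular G G'"
    and H': "H' \<in> rat_alg" "has_deriv_on_regular H H'"
    by blast
  have "G \<in> rat_alg" "H \<in> rat_alg" using poly_mult.hyps by (auto intro: poly_alg_subset_rat_alg)
  then show ?case
    using has_deriv_on_regular_mult[OF G'(2) H'(2)] rat_add[OF rat_mult[OF G'(1)] rat_mult[OF H'(1)]] by blast
qed

lemma inv_det_Jll_has_deriv_on_regular:
  assumes "has_deriv_on_regular det_Jll D"
  shows "has_deriv_on_regular inv_det_Jll (\<lambda>n \<omega> \<psi>. - D n \<omega> \<psi> * inv_det_Jll n \<omega> \<psi> * inv_det_Jll n \<omega> \<psi>)"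
  unfolding has_deriv_on_regular_def
proof (intro allI impI)
  fix n \<omega> \<psi> assume "\<omega> \<in> space M" "\<psi> \<in> regular n \<omega>"
  then have d: "(det_Jll n \<omega> has_real_derivative D n \<omega> \<psi>) (at \<psi>)" and nz: "det_Jll n \<omega> \<psi> \<noteq> 0"
    using assms regularD(2)[of \<psi> n \<omega>] unfolding has_deriv_on_regular_def by auto
  have "inv_det_Jll n \<omega> = (\<lambda>t. inverse (det_Jll n \<omega> t))"
    by (rule ext) (simp add: inv_det_Jll_def inverse_eq_divide)
  with DERIV_inverse_fun[OF d nz] nz
  show "(inv_det_Jll n \<omega> has_real_derivative - D n \<omega> \<psi> * inv_det_Jll n \<omega> \<psi> * inv_det_Jll n \<omega> \<psi>) (at \<psi>)"
    by (simp add: inv_det_Jll_def field_simps power2_eq_square)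
qed

lemma rat_alg_deriv: "G \<in> rat_alg \<Longrightarrow> \<exists>H\<in>rat_alg. has_deriv_on_regular G H"
proof (induction rule: rat_alg.induct)
  case (rat_pds js)
  then show ?case using poly_alg_deriv[OF poly_pds] by blast
next
  case rat_inv_det
  obtain D where D: "D \<in> rat_alg" "has_deriv_on_regular det_Jll D"
    using poly_alg_deriv[OF det_Jll_poly_alg] by blast
  have "(\<lambda>n \<omega> \<psi>. - D n \<omega> \<psi> * inv_det_Jll n \<omega> \<psi> * inv_det_Jll n \<omega> \<psi>) \<in> rat_alg"
    using rat_alg.rat_mult[OF rat_alg.rat_mult[OF rat_alg.rat_mult[OF rat_alg.rat_const[of "-1"] D(1)]
        rat_alg.rat_inv_det] rat_alg.rat_inv_det] by simp
  then show ?case using inv_det_Jll_has_deriv_on_regular[OF D(2)] by blast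
next
  case (rat_const c)
  show ?case using has_deriv_on_regular_const rat_alg.rat_const by blast
next
  case (rat_add G H)
  then obtain G' H' where G': "G' \<in> rat_alg" "has_deriv_on_regular G G'"
    and H': "H' \<in> rat_alg" "has_deriv_on_regular H H'"
    by blast
  show ?case using has_deriv_on_regular_add[OF G'(2) H'(2)] rat_alg.rat_add[OF G'(1) H'(1)] by blast
next
  case (rat_mult G H)
  then obtain G' H' where G': "G' \<in> rat_alg" "has_deriv_on_regular G G'"
    and H': "H' \<in> rat_alg" "has_deriv_on_regular H H'"
    by blast
  show ?case
    using has_deriv_on_regular_mult[OF G'(2) H'(2)]
      rat_alg.rat_add[OF rat_alg.rat_mult[OF G'(1) rat_mult.hyps(2)] rat_alg.rat_mult[OF H'(1) rat_mult.hyps(1)]]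
    by blast
qed

lemma rat_alg_iterated_deriv:
  assumes "G \<in> rat_alg"
    and "\<And>n \<omega> \<psi>. 1 \<le> n \<Longrightarrow> \<omega> \<in> space M \<Longrightarrow> \<psi> \<in> regular n \<omega> \<Longrightarrow> g n \<omega> \<psi> = s n * G n \<omega> \<psi>"
  shows "\<exists>H\<in>rat_alg. \<forall>n \<omega> \<psi>. 1 \<le> n \<longrightarrow> \<omega> \<in> space M \<longrightarrow> \<psi> \<in> regular n \<omega> \<longrightarrow>
    (deriv ^^ k) (g n \<omega>) \<psi> = s n * H n \<omega> \<psi>"
  using assms
proof (induction k arbitrary: g G)
  case 0 then show ?case by auto
next
  case (Suc k)
  obtain G' where G': "G' \<in> rat_alg" "has_deriv_on_regular G G'" using rat_alg_deriv[OF Suc.prems(1)] by blast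
  have "deriv (g n \<omega>) \<psi> = s n * G' n \<omega> \<psi>"
    if n: "1 \<le> n" and w: "\<omega> \<in> space M" and p: "\<psi> \<in> regular n \<omega>" for n \<omega> \<psi>
  proof (rule deriv_eqI_on_open[OF open_regular[OF w] p])
    show "\<And>y. y \<in> regular n \<omega> \<Longrightarrow> g n \<omega> y = s n * G n \<omega> y" using Suc.prems(2) w n by blast
    show "((\<lambda>y. s n * G n \<omega> y) has_real_derivative s n * G' n \<omega> \<psi>) (at \<psi>)"
      using G'(2) w p unfolding has_deriv_on_regular_def by (intro DERIV_cmult) blast
  qed
  with Suc.IH[of G' "\<lambda>n \<omega>. deriv (g n \<omega>)"] G'(1) show ?case
    by (simp only: funpow_deriv_Suc)
qed

end

lemma coercive_matrix_inv_det_le: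
  fixes A :: "real^'k^'k"
  assumes pd: "\<And>x. \<mu> * (x \<bullet> x) \<le> x \<bullet> (A *v x)" and mu: "\<mu> > 0"
  shows "1 / det A \<le> real (card {p. p permutes (UNIV::'k set)}) * (1 / \<mu>) ^ CARD('k)"
proof -
  define B where "B = matrix_inv A"
  have dA: "det A > 0" by (rule coercive_matrix_det_pos[OF pd mu])
  then have AB: "A ** B = mat 1" unfolding B_def by (intro matrix_inv_if_det_nonzero(2)) simp
  have "\<bar>B $ i $ j\<bar> \<le> 1 / \<mu>" for i j
  proof -
    have "A *v (B *v axis j 1) = axis j 1" by (simp add: matrix_vector_mul_assoc AB)
    then have "norm (B *v axis j 1) \<le> 1 / \<mu>"
      using coercive_matrix_solution_norm_le[OF pd mu] by fastforce
    moreover have "\<bar>B $ i $ j\<bar> \<le> norm (B *v axis j 1)"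
      using Finite_Cartesian_Product.norm_nth_le[of "B *v axis j 1" i]
      by (simp add: matrix_vector_mult_basis column_def)
    ultimately show ?thesis by simp
  qed
  from abs_det_le[of B, OF this] have "\<bar>det B\<bar> \<le> real (card {p. p permutes (UNIV::'k set)}) * (1 / \<mu>) ^ CARD('k)" .
  moreover have "1 / det A = det B" using det_mul[of A B] AB dA by (simp add: field_simps)
  ultimately show ?thesis using abs_ge_self[of "det B"] by linarith
qed

lemma mat_eigenvalue_matrix_inv:
  fixes A :: "real^'k^'k"
  assumes "det A \<noteq> 0" "v \<noteq> 0" "A *v v = e *\<^sub>R v"
  shows "mat_eigenvalue (matrix_inv A) (1 / e)"
proof -
  have "v = matrix_inv A *v (A *v v)"
    by (simp add: matrix_vector_mul_assoc matrix_inv_if_det_nonzero(1)[OF assms(1)])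
  also have "\<dots> = e *\<^sub>R (matrix_inv A *v v)" by (simp add: assms(3) matrix_vector_mult_scaleR)
  finally have v: "v = e *\<^sub>R (matrix_inv A *v v)" .
  with assms(2) have "e \<noteq> 0" by auto
  have "(1 / e) *\<^sub>R v = (1 / e) *\<^sub>R (e *\<^sub>R (matrix_inv A *v v))" using v by (rule arg_cong)
  also have "\<dots> = matrix_inv A *v v" using \<open>e \<noteq> 0\<close> by simp
  finally show ?thesis using assms(2) by (auto simp: mat_eigenvalue_def)
qed

lemma mat_eigenvalue_scaleR:
  "mat_eigenvalue (A :: real^'k^'k) e \<Longrightarrow> mat_eigenvalue (c *\<^sub>R A) (c * e)"
  by (auto simp: mat_eigenvalue_def scaleR_matrix_vector_assoc[symmetric])

lemma kappa_ratio_bound: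
  fixes n q Ce h c k :: real
  assumes n: "n \<ge> 1" and Ce: "Ce > 0" and q: "q \<ge> 1 / Ce" and h: "\<bar>h\<bar> \<le> c" and k: "k \<ge> 0"
  shows "\<bar>(n * h) / (n * q) powr (k / 2)\<bar> \<le> c * Ce powr (k / 2) * n powr (- (k - 2) / 2)"
proof -
  have q0: "q > 0" using q Ce by (smt (verit) divide_pos_pos)
  have n0: "n > 0" using n by simp
  have "n powr (k / 2) / Ce powr (k / 2) = n powr (k / 2) * (1 / Ce) powr (k / 2)"
    using Ce by (simp add: powr_divide)
  also have "\<dots> \<le> n powr (k / 2) * q powr (k / 2)" using q Ce k by (intro mult_left_mono powr_mono2) auto
  also have "\<dots> = (n * q) powr (k / 2)" using n0 q0 by (simp add: powr_mult)
  finally have den: "n powr (k / 2) / Ce powr (k / 2) \<le> (n * q) powr (k / 2)" .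
  have "\<bar>(n * h) / (n * q) powr (k / 2)\<bar> \<le> n * c / (n * q) powr (k / 2)"
    using h n0 by (simp add: abs_mult divide_right_mono)
  also have "\<dots> \<le> n * c / (n powr (k / 2) / Ce powr (k / 2))"
    using den h n0 q0 Ce by (intro divide_left_mono) (auto intro!: mult_pos_pos)
  also have "\<dots> = c * Ce powr (k / 2) * (n / n powr (k / 2))" by (simp add: field_simps)
  also have "n / n powr (k / 2) = n powr (- (k - 2) / 2)"
  proof -
    have "n powr (1 - k / 2) = n / n powr (k / 2)" using n0 by (subst powr_diff) simp
    moreover have "- (k - 2) / 2 = 1 - k / 2" by (simp add: field_simps)
    ultimately show ?thesis by (simp only:)
  qed
  finally show ?thesis .
qed

locale profile_likelihood_asymptotics = profile_likelihood M l psihat lamhat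
  for M :: "'a measure"
    and l :: "nat \<Rightarrow> 'a \<Rightarrow> real \<times> (real^'m) \<Rightarrow> real"
    and psihat :: "nat \<Rightarrow> 'a \<Rightarrow> real"
    and lamhat :: "nat \<Rightarrow> 'a \<Rightarrow> real \<Rightarrow> real^'m" +
  assumes pds_Op: "\<forall>js. length js > 1 \<longrightarrow>
      Op M (\<lambda>n \<omega>. pds (l n \<omega>) js (psihat n \<omega>, lamhat n \<omega> (psihat n \<omega>))) (\<lambda>n. real n)"
    and info_pos: "\<forall>n\<ge>1. \<forall>\<omega>\<in>space M. \<forall>e.
      mat_eigenvalue ((1 / real n) *\<^sub>R obs_info (l n \<omega>) (psihat n \<omega>, lamhat n \<omega> (psihat n \<omega>))) e \<longrightarrow> e > 0"
    and inv_info_Op: "Op_eig M (\<lambda>n \<omega>. real n *\<^sub>R matrix_inv (obs_info (l n \<omega>) (psihat n \<omega>, lamhat n \<omega> (psihat n \<omega>))))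
      (\<lambda>n. 1)"
begin

definition Jhat :: "nat \<Rightarrow> 'a \<Rightarrow> real^('m option)^('m option)" where
  "Jhat n \<omega> = (1 / real n) *\<^sub>R obs_info (l n \<omega>) (psihat n \<omega>, lamhat n \<omega> (psihat n \<omega>))"

lemma Jhat_entry: "Jhat n \<omega> $ a $ b = - scaled_pds [a, b] n \<omega> (psihat n \<omega>)"
  by (simp add: Jhat_def obs_info_def scaled_pds_def)

lemma Jhat_symmetric: "\<omega> \<in> space M \<Longrightarrow> transpose (Jhat n \<omega>) = Jhat n \<omega>"
  using scaled_pds_commute by (simp add: vec_eq_iff Finite_Cartesian_Product.transpose_def Jhat_entry)

lemma Jhat_min_eigenvalue:
  assumes "1 \<le> n" "\<omega> \<in> space M"
  obtains \<mu> v0 where "\<mu> > 0" "v0 \<noteq> 0" "Jhat n \<omega> *v v0 = \<mu> *\<^sub>R v0"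
    "\<And>v. \<mu> * (v \<bullet> v) \<le> v \<bullet> (Jhat n \<omega> *v v)"
proof -
  obtain \<mu> v0 where v0: "v0 \<noteq> 0" "Jhat n \<omega> *v v0 = \<mu> *\<^sub>R v0"
    and min: "\<And>v. \<mu> * (v \<bullet> v) \<le> v \<bullet> (Jhat n \<omega> *v v)"
    using symmetric_matrix_min_eigenvalue[OF Jhat_symmetric[OF assms(2)]] by blast
  have "mat_eigenvalue (Jhat n \<omega>) \<mu>" using v0 by (auto simp: mat_eigenvalue_def)
  then have "\<mu> > 0" using info_pos assms by (simp add: Jhat_def)
  with v0 min that show ?thesis by blast
qed

lemma Jll_psihat_coercive:
  assumes "\<And>v. \<mu> * (v \<bullet> v) \<le> v \<bullet> (Jhat n \<omega> *v v)"
  shows "\<mu> * (x \<bullet> x) \<le> x \<bullet> (Jll n \<omega> (psihat n \<omega>) *v x)"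
  using assms[of "\<chi> a. case a of None \<Rightarrow> 0 | Some i \<Rightarrow> x $ i"]
  by (simp add: inner_vec_def sum_UNIV_option matrix_vector_mult_def Jll_def Jhat_entry)

lemma psihat_regular:
  assumes "1 \<le> n" "\<omega> \<in> space M"
  shows "psihat n \<omega> \<in> regular n \<omega>"
proof -
  obtain \<mu> where "\<mu> > 0" "\<And>v. \<mu> * (v \<bullet> v) \<le> v \<bullet> (Jhat n \<omega> *v v)"
    using Jhat_min_eigenvalue[OF assms] by blast
  then have "det_Jll n \<omega> (psihat n \<omega>) > 0"
    unfolding det_Jll_def by (intro coercive_matrix_det_pos[OF Jll_psihat_coercive])
  then show ?thesis using nbhd_spec(2)[OF assms(2)] by (simp add: regular_def)
qed

text \<open>The reciprocal of the smallest eigenvalue of \<open>\<jmath>/n\<close> is an eigenvalue of \<open>n \<jmath>\<^sup>-\<^sup>1\<close>.\<close>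

lemma inverse_min_eigenvalue_le:
  assumes n: "1 \<le> n" and w: "\<omega> \<in> space M"
    and bound: "\<And>e. mat_eigenvalue (real n *\<^sub>R matrix_inv (obs_info (l n \<omega>) (psihat n \<omega>, lamhat n \<omega> (psihat n \<omega>)))) e
      \<Longrightarrow> \<bar>e\<bar> \<le> C"
    and mu: "\<mu> > 0" and v0: "v0 \<noteq> 0" "Jhat n \<omega> *v v0 = \<mu> *\<^sub>R v0"
    and min: "\<And>v. \<mu> * (v \<bullet> v) \<le> v \<bullet> (Jhat n \<omega> *v v)"
  shows "1 / \<mu> \<le> C"
proof -
  define J where "J = obs_info (l n \<omega>) (psihat n \<omega>, lamhat n \<omega> (psihat n \<omega>))"
  have J: "J = real n *\<^sub>R Jhat n \<omega>" using n by (simp add: Jhat_def J_def)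
  have "det J \<noteq> 0"
    using coercive_matrix_det_pos[OF min mu] n by (simp add: J det_scaleR)
  moreover have "J *v v0 = (real n * \<mu>) *\<^sub>R v0"
    by (simp add: J v0(2) scaleR_matrix_vector_assoc[symmetric])
  ultimately have "mat_eigenvalue (matrix_inv J) (1 / (real n * \<mu>))"
    by (rule mat_eigenvalue_matrix_inv[OF _ v0(1)])
  then have "mat_eigenvalue (real n *\<^sub>R matrix_inv J) (real n * (1 / (real n * \<mu>)))"
    by (rule mat_eigenvalue_scaleR)
  then show ?thesis using bound[of "1 / \<mu>"] n mu by (simp add: J_def)
qed

definition large_inv_eig :: "real \<Rightarrow> nat \<Rightarrow> 'a set" where
  "large_inv_eig C n = {\<omega>\<in>space M. \<exists>e.
    mat_eigenvalue (real n *\<^sub>R matrix_inv (obs_info (l n \<omega>) (psihat n \<omega>, lamhat n \<omega> (psihat n \<omega>)))) e \<and> \<bar>e\<bar> > C * 1}"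

lemma Op_sets_large_inv_eig: "Op_sets M large_inv_eig"
  using inv_info_Op unfolding Op_eig_iff_Op_sets large_inv_eig_def[abs_def] by simp

lemma inv_det_Jll_bound:
  assumes n: "1 \<le> n" and w: "\<omega> \<in> space M" and good: "\<omega> \<notin> large_inv_eig C n"
  shows "\<bar>inv_det_Jll n \<omega> (psihat n \<omega>)\<bar> \<le> real (card {p. p permutes (UNIV::'m set)}) * C ^ CARD('m)"
proof -
  obtain \<mu> v0 where mu: "\<mu> > 0" and v0: "v0 \<noteq> 0" "Jhat n \<omega> *v v0 = \<mu> *\<^sub>R v0"
    and min: "\<And>v. \<mu> * (v \<bullet> v) \<le> v \<bullet> (Jhat n \<omega> *v v)"
    using Jhat_min_eigenvalue[OF n w] by blast
  have "1 / \<mu> \<le> C"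
    using good w by (intro inverse_min_eigenvalue_le[OF n w _ mu v0 min]) (force simp: large_inv_eig_def)
  then have "(1 / \<mu>) ^ CARD('m) \<le> C ^ CARD('m)" using mu by (intro power_mono) auto
  moreover have coercive: "\<And>x. \<mu> * (x \<bullet> x) \<le> x \<bullet> (Jll n \<omega> (psihat n \<omega>) *v x)"
    by (rule Jll_psihat_coercive[OF min])
  ultimately show ?thesis
    using coercive_matrix_inv_det_le[OF coercive mu] coercive_matrix_det_pos[OF coercive mu]
    by (simp add: inv_det_Jll_def det_Jll_def) (smt (verit) mult_left_mono of_nat_0_le_iff)
qed

lemma rat_alg_Op: "G \<in> rat_alg \<Longrightarrow> Op M (\<lambda>n \<omega>. G n \<omega> (psihat n \<omega>)) (\<lambda>n. 1)"
proof (induction rule: rat_alg.induct)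
  case (rat_pds js)
  show ?case
  proof (rule Op_of_bound)
    show "Op M (\<lambda>n \<omega>. pds (l n \<omega>) js (psihat n \<omega>, lamhat n \<omega> (psihat n \<omega>))) (\<lambda>n. real n)"
      using pds_Op rat_pds by simp
    fix C
    have "norm (scaled_pds js n \<omega> (psihat n \<omega>)) \<le> C * 1"
      if "1 \<le> n" "norm (pds (l n \<omega>) js (psihat n \<omega>, lamhat n \<omega> (psihat n \<omega>))) \<le> C * real n" for n \<omega>
      using that by (simp add: scaled_pds_def divide_le_eq)
    then show "\<exists>C' N0. \<forall>n\<ge>N0. \<forall>\<omega>\<in>space M.
        norm (pds (l n \<omega>) js (psihat n \<omega>, lamhat n \<omega> (psihat n \<omega>))) \<le> C * real n \<longrightarrow>
        norm (scaled_pds js n \<omega> (psihat n \<omega>)) \<le> C' * 1"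
      by (intro exI[of _ C] exI[of _ 1]) simp
  qed
next
  case rat_inv_det
  show ?case
  proof (rule Op_of_bounds_outside[where J = "{}" and Y = "\<lambda>_ n \<omega>. 0::real", OF _ _ Op_sets_large_inv_eig])
    fix C Ce
    show "\<exists>C' N0. \<forall>n\<ge>N0. \<forall>\<omega>\<in>space M. (\<forall>j\<in>{}. norm (0::real) \<le> C j * b j n) \<longrightarrow>
        \<omega> \<notin> large_inv_eig Ce n \<longrightarrow> norm (inv_det_Jll n \<omega> (psihat n \<omega>)) \<le> C' * 1"
      using inv_det_Jll_bound
      by (intro exI[of _ "real (card {p. p permutes (UNIV::'m set)}) * Ce ^ CARD('m)"] exI[of _ 1]) simp
  qed simp_all
next
  case (rat_const c) show ?case by (rule Op_const)
next
  case (rat_add G H) show ?case by (rule Op_add[OF rat_add.IH])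
next
  case (rat_mult G H) show ?case by (rule Op_mult[OF rat_mult.IH])
qed

end

context profile_likelihood_asymptotics
begin

lemma rat_alg_iterated_deriv_Op:
  assumes "G \<in> rat_alg" "\<And>n \<omega> \<psi>. 1 \<le> n \<Longrightarrow> \<omega> \<in> space M \<Longrightarrow> \<psi> \<in> regular n \<omega> \<Longrightarrow> g n \<omega> \<psi> = G n \<omega> \<psi>"
  shows "Op M (\<lambda>n \<omega>. (deriv ^^ k) (g n \<omega>) (psihat n \<omega>)) (\<lambda>n. 1)"
proof -
  obtain H where H: "H \<in> rat_alg" "\<And>n \<omega> \<psi>. 1 \<le> n \<Longrightarrow> \<omega> \<in> space M \<Longrightarrow> \<psi> \<in> regular n \<omega> \<Longrightarrow>
      (deriv ^^ k) (g n \<omega>) \<psi> = 1 * H n \<omega> \<psi>"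
    using rat_alg_iterated_deriv[of G g "\<lambda>n. 1" k] assms by auto
  show ?thesis using H(2) psihat_regular by (intro Op_cong[OF rat_alg_Op[OF H(1)]]) simp
qed

lemma rat_alg_iterated_deriv_Op_real_n:
  assumes "G \<in> rat_alg" "\<And>n \<omega> \<psi>. 1 \<le> n \<Longrightarrow> \<omega> \<in> space M \<Longrightarrow> \<psi> \<in> regular n \<omega> \<Longrightarrow> g n \<omega> \<psi> = real n * G n \<omega> \<psi>"
  shows "Op M (\<lambda>n \<omega>. (deriv ^^ k) (g n \<omega>) (psihat n \<omega>)) (\<lambda>n. real n)"
proof -
  obtain H where H: "H \<in> rat_alg" "\<And>n \<omega> \<psi>. 1 \<le> n \<Longrightarrow> \<omega> \<in> space M \<Longrightarrow> \<psi> \<in> regular n \<omega> \<Longrightarrow>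
      (deriv ^^ k) (g n \<omega>) \<psi> = real n * H n \<omega> \<psi>"
    using rat_alg_iterated_deriv[of G g real k] assms by auto
  show ?thesis using H(2) psihat_regular by (intro Op_scale_real_n[OF rat_alg_Op[OF H(1)]]) (simp add: abs_mult)
qed

lemma lamhat_derivs_Op:
  assumes "1 \<le> k"
  shows "Op M (\<lambda>n \<omega>. (\<chi> i. (deriv ^^ k) (\<lambda>t. lamhat n \<omega> t $ i) (psihat n \<omega>))) (\<lambda>n. 1)"
proof (rule Op_vec)
  fix i
  obtain k' where "k = Suc k'" using assms by (cases k) auto
  moreover have "deriv (\<lambda>t. lamhat n \<omega> t $ i) = dlamhat i n \<omega>" for n \<omega>
    by (rule ext) (simp add: dlamhat_def)
  moreover have "dlamhat i n \<omega> \<psi> = cramer_dlamhat i n \<omega> \<psi>" if "\<omega> \<in> space M" "\<psi> \<in> regular n \<omega>" for n \<omega> \<psi>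
    using dlamhat_eq_cramer[OF that(1) regularD(1)[OF that(2)]] regularD(2)[OF that(2)] by simp
  then have "Op M (\<lambda>n \<omega>. (deriv ^^ k') (dlamhat i n \<omega>) (psihat n \<omega>)) (\<lambda>n. 1)"
    by (intro rat_alg_iterated_deriv_Op[OF cramer_dlamhat_rat_alg])
  ultimately show "Op M (\<lambda>n \<omega>. (deriv ^^ k) (\<lambda>t. lamhat n \<omega> t $ i) (psihat n \<omega>)) (\<lambda>n. 1)"
    by (simp only: funpow_deriv_Suc)
qed

lemma info_lp_derivs_Op:
  "Op M (\<lambda>n \<omega>. (\<chi> i. (deriv ^^ k) (\<lambda>t. info_lp (l n \<omega>) (t, lamhat n \<omega> t) $ i) (psihat n \<omega>))) (\<lambda>n. real n)"
proof -
  have "Op M (\<lambda>n \<omega>. (deriv ^^ k) (\<lambda>t. info_lp (l n \<omega>) (t, lamhat n \<omega> t) $ i) (psihat n \<omega>)) (\<lambda>n. real n)" for i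
    by (rule rat_alg_iterated_deriv_Op_real_n[OF poly_alg_subset_rat_alg[OF poly_alg_uminus_pds[of "[Some i, None]"]]])
      (simp_all add: info_lp_def scaled_pds_def)
  then show ?thesis by (rule Op_vec)
qed

lemma info_ll_derivs_Op:
  "Op M (\<lambda>n \<omega>. (\<chi> i j. (deriv ^^ k) (\<lambda>t. info_ll (l n \<omega>) (t, lamhat n \<omega> t) $ i $ j) (psihat n \<omega>))) (\<lambda>n. real n)"
proof -
  have "Op M (\<lambda>n \<omega>. (deriv ^^ k) (\<lambda>t. info_ll (l n \<omega>) (t, lamhat n \<omega> t) $ i $ j) (psihat n \<omega>)) (\<lambda>n. real n)"
    for i j
    by (rule rat_alg_iterated_deriv_Op_real_n[OF poly_alg_subset_rat_alg[OF poly_alg_uminus_pds[of "[Some i, Some j]"]]])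
      (simp_all add: info_ll_def scaled_pds_def)
  then show ?thesis by (intro Op_vec)
qed

lemma gam_Op:
  assumes "1 \<le> k"
  shows "Op M (\<lambda>n \<omega>. gam (l n \<omega>) (lamhat n \<omega>) k (psihat n \<omega>)) (\<lambda>n. 1)"
proof -
  obtain k' where k': "k = Suc k'" using assms by (cases k) auto
  obtain D where D: "D \<in> rat_alg" "has_deriv_on_regular det_Jll D"
    using poly_alg_deriv[OF det_Jll_poly_alg] by blast
  define log_det where "log_det n \<omega> t = ln (det (info_ll (l n \<omega>) (t, lamhat n \<omega> t)))" for n \<omega> t
  have "deriv (log_det n \<omega>) \<psi> = D n \<omega> \<psi> * inv_det_Jll n \<omega> \<psi>"
    if n: "1 \<le> n" and w: "\<omega> \<in> space M" and p: "\<psi> \<in> regular n \<omega>" for n \<omega> \<psi>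
  proof -
    define c where "c = real n ^ CARD('m)"
    have "c > 0" using n by (simp add: c_def)
    have "info_ll (l n \<omega>) (t, lamhat n \<omega> t) = real n *\<^sub>R Jll n \<omega> t" for t
      using n by (simp add: vec_eq_iff info_ll_def Jll_def scaled_pds_def)
    then have "log_det n \<omega> = (\<lambda>t. ln (c * det_Jll n \<omega> t))"
      by (intro ext) (simp add: log_det_def det_scaleR det_Jll_def c_def)
    moreover have "((\<lambda>t. ln (c * det_Jll n \<omega> t)) has_real_derivative
        1 / (c * det_Jll n \<omega> \<psi>) * (c * D n \<omega> \<psi>)) (at \<psi>)"
      using D(2) w p regularD(2)[OF p] \<open>c > 0\<close> unfolding has_deriv_on_regular_def
      by (intro DERIV_chain2[OF DERIV_ln_divide] DERIV_cmult) auto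
    ultimately show ?thesis
      using \<open>c > 0\<close> regularD(2)[OF p] by (simp add: DERIV_imp_deriv inv_det_Jll_def)
  qed
  then have "Op M (\<lambda>n \<omega>. (deriv ^^ k') (deriv (log_det n \<omega>)) (psihat n \<omega>)) (\<lambda>n. 1)"
    using D(1) by (intro rat_alg_iterated_deriv_Op[of "\<lambda>n \<omega> \<psi>. D n \<omega> \<psi> * inv_det_Jll n \<omega> \<psi>"])
      (auto intro: rat_mult rat_inv_det)
  then show ?thesis unfolding gam_def log_det_def k' by (simp only: funpow_deriv_Suc)
qed

text \<open>\<open>\<zeta>\<^sub>2/n\<close>: the chain rule along the profile curve, where the nuisance partials vanish.\<close>

definition zeta2_scaled :: "nat \<Rightarrow> 'a \<Rightarrow> real \<Rightarrow> real" where
  "zeta2_scaled n \<omega> \<psi> =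
    scaled_pds [None, None] n \<omega> \<psi> + (\<Sum>i\<in>UNIV. scaled_pds [Some i, None] n \<omega> \<psi> * cramer_dlamhat i n \<omega> \<psi>)"

lemma zeta2_scaled_rat_alg: "zeta2_scaled \<in> rat_alg"
  unfolding zeta2_scaled_def[abs_def] by (intro rat_add rat_pds rat_alg_sum rat_mult cramer_dlamhat_rat_alg) auto

lemma profile_has_derivative:
  assumes "1 \<le> n" "\<omega> \<in> space M" "\<psi> \<in> nbhd n \<omega>"
  shows "((\<lambda>t. l n \<omega> (t, lamhat n \<omega> t)) has_real_derivative real n * scaled_pds [None] n \<omega> \<psi>) (at \<psi>)"
proof -
  have "scaled_pds [Some i] n \<omega> \<psi> = 0" for i
    using pds_nuisance_eq_0[OF assms(2)] by (simp add: scaled_pds_def)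
  then have "(scaled_pds [] n \<omega> has_real_derivative scaled_pds [None] n \<omega> \<psi>) (at \<psi>)"
    using scaled_pds_has_derivative[OF assms(2,3), of "[]"] by simp
  from DERIV_cmult[OF this, of "real n"] show ?thesis
    using assms(1) by (simp add: scaled_pds_def)
qed

lemma zeta_1_eq_0:
  assumes "1 \<le> n" "\<omega> \<in> space M"
  shows "zeta (l n \<omega>) (lamhat n \<omega>) 1 (psihat n \<omega>) = 0"
proof -
  note d = profile_has_derivative[OF assms nbhd_spec(2)[OF assms(2)]]
  have "real n * scaled_pds [None] n \<omega> (psihat n \<omega>) = 0"
    by (rule DERIV_local_max[OF d, of 1]) (use mle assms(2) in auto)
  then show ?thesis using DERIV_imp_deriv[OF d] by (simp add: zeta_def)
qed

lemma deriv_deriv_profile: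
  assumes "1 \<le> n" "\<omega> \<in> space M" "\<psi> \<in> regular n \<omega>"
  shows "deriv (deriv (\<lambda>t. l n \<omega> (t, lamhat n \<omega> t))) \<psi> = real n * zeta2_scaled n \<omega> \<psi>"
proof (rule deriv_eqI_on_open[OF open_regular[OF assms(2)] assms(3)])
  show "deriv (\<lambda>t. l n \<omega> (t, lamhat n \<omega> t)) y = real n * scaled_pds [None] n \<omega> y" if "y \<in> regular n \<omega>" for y
    using profile_has_derivative[OF assms(1,2) regularD(1)[OF that]] by (rule DERIV_imp_deriv)
  have "(scaled_pds [None] n \<omega> has_real_derivative zeta2_scaled n \<omega> \<psi>) (at \<psi>)"
    using scaled_pds_has_deriv_on_regular[of "[None]"] assms(2,3)
    unfolding has_deriv_on_regular_def zeta2_scaled_def by simp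
  then show "((\<lambda>y. real n * scaled_pds [None] n \<omega> y) has_real_derivative real n * zeta2_scaled n \<omega> \<psi>) (at \<psi>)"
    by (rule DERIV_cmult)
qed

text \<open>With \<open>v = (1, \<partial>\<lambda>\<^sub>\<psi>/\<partial>\<psi>)\<close>, the first-order conditions give \<open>-\<zeta>\<^sub>2/n = v\<^sup>T (\<jmath>/n) v \<ge> \<mu> |v|\<^sup>2 \<ge> \<mu>\<close>.\<close>

lemma min_eigenvalue_le_neg_zeta2_scaled:
  assumes n: "1 \<le> n" and w: "\<omega> \<in> space M" and min: "\<And>v. \<mu> * (v \<bullet> v) \<le> v \<bullet> (Jhat n \<omega> *v v)"
    and mu: "\<mu> > 0"
  shows "\<mu> \<le> - zeta2_scaled n \<omega> (psihat n \<omega>)"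
proof -
  let ?p = "psihat n \<omega>"
  define L where "L i = cramer_dlamhat i n \<omega> ?p" for i
  define s where "s a b = Jhat n \<omega> $ a $ b" for a b
  have sym: "s a b = s b a" for a b
  proof -
    have "transpose (Jhat n \<omega>) $ a $ b = Jhat n \<omega> $ b $ a"
      by (simp add: Finite_Cartesian_Product.transpose_def)
    then show ?thesis using Jhat_symmetric[OF w] by (simp add: s_def)
  qed
  have reg: "?p \<in> regular n \<omega>" by (rule psihat_regular[OF n w])
  have foc: "(\<Sum>k\<in>UNIV. s (Some a) (Some k) * L k) = - s (Some a) None" for a
    using Jll_dlamhat_eq[OF w regularD(1)[OF reg], of a] dlamhat_eq_cramer[OF w regularD(1)[OF reg]] regularD(2)[OF reg]
    by (simp add: L_def s_def Jhat_entry Jll_def sum_negf scaled_pds_commute[OF w, of "Some a"])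
  define v where "v = (\<chi> a. case a of None \<Rightarrow> 1 | Some i \<Rightarrow> L i)"
  have Sv: "(Jhat n \<omega> *v v) $ a = s a None + (\<Sum>k\<in>UNIV. s a (Some k) * L k)" for a
    by (simp add: matrix_vector_mult_def sum_UNIV_option v_def s_def)
  have "(Jhat n \<omega> *v v) $ Some i = 0" for i using Sv[of "Some i"] foc[of i] by simp
  moreover have "v $ None = 1" by (simp add: v_def)
  ultimately have "v \<bullet> (Jhat n \<omega> *v v) = (Jhat n \<omega> *v v) $ None"
    by (simp add: inner_vec_def sum_UNIV_option)
  also have "\<dots> = s None None + (\<Sum>k\<in>UNIV. s None (Some k) * L k)" by (rule Sv)
  also have "\<dots> = - zeta2_scaled n \<omega> ?p"
    using sym by (simp add: s_def Jhat_entry L_def zeta2_scaled_def sum_negf[symmetric])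
  finally have "v \<bullet> (Jhat n \<omega> *v v) = - zeta2_scaled n \<omega> ?p" .
  moreover have "v \<bullet> v \<ge> 1" by (simp add: inner_vec_def sum_UNIV_option v_def sum_nonneg)
  then have "\<mu> * 1 \<le> \<mu> * (v \<bullet> v)" using mu by (intro mult_left_mono) auto
  ultimately show ?thesis using min[of v] by simp
qed

lemma zeta_Op:
  assumes "2 \<le> k"
  obtains H where "H \<in> rat_alg" "\<And>n \<omega>. 1 \<le> n \<Longrightarrow> \<omega> \<in> space M \<Longrightarrow>
    zeta (l n \<omega>) (lamhat n \<omega>) k (psihat n \<omega>) = real n * H n \<omega> (psihat n \<omega>)"
proof -
  obtain k' where k': "k = Suc (Suc k')" using assms by (metis add_2_eq_Suc le_Suc_ex)
  obtain H where H_alg: "H \<in> rat_alg" and H: "\<And>n \<omega> \<psi>. 1 \<le> n \<Longrightarrow> \<omega> \<in> space M \<Longrightarrow> \<psi> \<in> regular n \<omega> \<Longrightarrow>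
      (deriv ^^ k') (deriv (deriv (\<lambda>t. l n \<omega> (t, lamhat n \<omega> t)))) \<psi> = real n * H n \<omega> \<psi>"
    using rat_alg_iterated_deriv[OF zeta2_scaled_rat_alg,
        of "\<lambda>n \<omega>. deriv (deriv (\<lambda>t. l n \<omega> (t, lamhat n \<omega> t)))" real k'] deriv_deriv_profile by blast
  have "zeta (l n \<omega>) (lamhat n \<omega>) k \<psi> = (deriv ^^ k') (deriv (deriv (\<lambda>t. l n \<omega> (t, lamhat n \<omega> t)))) \<psi>"
    for n \<omega> \<psi>
    by (simp only: zeta_def k' funpow_deriv_Suc)
  with H psihat_regular show ?thesis by (intro that[OF H_alg]) simp
qed

end

context profile_likelihood_asymptotics
begin

lemma zeta_2_eq:
  assumes "1 \<le> n" "\<omega> \<in> space M"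
  shows "zeta (l n \<omega>) (lamhat n \<omega>) 2 (psihat n \<omega>) = real n * zeta2_scaled n \<omega> (psihat n \<omega>)"
  using deriv_deriv_profile[OF assms psihat_regular[OF assms]] by (simp add: zeta_def numeral_2_eq_2)

lemma kappa_bound_outside_large_inv_eig:
  assumes k: "2 \<le> k" and n: "1 \<le> n" and w: "\<omega> \<in> space M" and good: "\<omega> \<notin> large_inv_eig Ce n"
    and zeta: "zeta (l n \<omega>) (lamhat n \<omega>) k (psihat n \<omega>) = real n * h" and h: "\<bar>h\<bar> \<le> c"
  shows "\<bar>kappa (l n \<omega>) (lamhat n \<omega>) k (psihat n \<omega>)\<bar> \<le> c * Ce powr (real k / 2) * real n powr (- (real k - 2) / 2)"
proof -
  obtain \<mu> v0 where mu: "\<mu> > 0" and v0: "v0 \<noteq> 0" "Jhat n \<omega> *v v0 = \<mu> *\<^sub>R v0"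
    and min: "\<And>v. \<mu> * (v \<bullet> v) \<le> v \<bullet> (Jhat n \<omega> *v v)"
    using Jhat_min_eigenvalue[OF n w] by blast
  have "1 / \<mu> \<le> Ce"
    using good w by (intro inverse_min_eigenvalue_le[OF n w _ mu v0 min]) (force simp: large_inv_eig_def)
  moreover have "0 < 1 / \<mu>" using mu by simp
  ultimately have Ce: "Ce > 0" by linarith
  with \<open>1 / \<mu> \<le> Ce\<close> mu have "1 / Ce \<le> \<mu>" by (simp add: divide_le_eq mult.commute)
  then have q: "1 / Ce \<le> - zeta2_scaled n \<omega> (psihat n \<omega>)"
    using min_eigenvalue_le_neg_zeta2_scaled[OF n w min mu] by linarith
  have "kappa (l n \<omega>) (lamhat n \<omega>) k (psihat n \<omega>)
      = (real n * h) / (real n * (- zeta2_scaled n \<omega> (psihat n \<omega>))) powr (real k / 2)"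
    using zeta zeta_2_eq[OF n w] by (simp add: kappa_def)
  also have "\<bar>\<dots>\<bar> \<le> c * Ce powr (real k / 2) * real n powr (- (real k - 2) / 2)"
    using n Ce q h by (intro kappa_ratio_bound) auto
  finally show ?thesis .
qed

lemma kappa_Op:
  assumes "1 \<le> k"
  shows "Op M (\<lambda>n \<omega>. kappa (l n \<omega>) (lamhat n \<omega>) k (psihat n \<omega>)) (\<lambda>n. real n powr (- (real k - 2) / 2))"
proof (cases "k = 1")
  case True
  then show ?thesis using zeta_1_eq_0 by (intro Op_cong[OF Op_zero]) (simp add: kappa_def)
next
  case False
  then have k: "2 \<le> k" using assms by simp
  obtain H where H: "H \<in> rat_alg" "\<And>n \<omega>. 1 \<le> n \<Longrightarrow> \<omega> \<in> space M \<Longrightarrow>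
      zeta (l n \<omega>) (lamhat n \<omega>) k (psihat n \<omega>) = real n * H n \<omega> (psihat n \<omega>)"
    using zeta_Op[OF k] by blast
  show ?thesis
  proof (rule Op_of_bounds_outside[where J = "{()}" and Y = "\<lambda>_ n \<omega>. H n \<omega> (psihat n \<omega>)" and b = "\<lambda>_ n. 1",
        OF _ _ Op_sets_large_inv_eig])
    show "\<forall>j\<in>{()}. Op M (\<lambda>n \<omega>. H n \<omega> (psihat n \<omega>)) (\<lambda>n. 1)" using rat_alg_Op[OF H(1)] by simp
    fix C :: "unit \<Rightarrow> real" and Ce :: real
    show "\<exists>C' N0. \<forall>n\<ge>N0. \<forall>\<omega>\<in>space M. (\<forall>j\<in>{()}. norm (H n \<omega> (psihat n \<omega>)) \<le> C j * 1) \<longrightarrow>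
        \<omega> \<notin> large_inv_eig Ce n \<longrightarrow>
        norm (kappa (l n \<omega>) (lamhat n \<omega>) k (psihat n \<omega>)) \<le> C' * real n powr (- (real k - 2) / 2)"
      using kappa_bound_outside_large_inv_eig[OF k _ _ _ H(2)]
      by (intro exI[of _ "C () * Ce powr (real k / 2)"] exI[of _ 1]) simp
  qed simp
qed

end

theorem lemma2:
  fixes M :: "'a measure"
    and l :: "nat \<Rightarrow> 'a \<Rightarrow> real \<times> (real^'m) \<Rightarrow> real"
    and psihat :: "nat \<Rightarrow> 'a \<Rightarrow> real"
    and lamhat :: "nat \<Rightarrow> 'a \<Rightarrow> real \<Rightarrow> real^'m"
    and psi0 :: real and lam0 :: "real^'m"
  assumes prob: "prob_space M"
    and smooth: "\<forall>n. \<forall>\<omega>\<in>space M. smooth_fun (l n \<omega>)"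
    and prof_max: "\<forall>n. \<forall>\<omega>\<in>space M. \<forall>psi lam. l n \<omega> (psi, lam) \<le> l n \<omega> (psi, lamhat n \<omega> psi)"
    and mle: "\<forall>n. \<forall>\<omega>\<in>space M. \<forall>th. l n \<omega> th \<le> l n \<omega> (psihat n \<omega>, lamhat n \<omega> (psihat n \<omega>))"
    and prof_smooth: "\<forall>n. \<forall>\<omega>\<in>space M. \<exists>U. open U \<and> psihat n \<omega> \<in> U \<and>
        (\<forall>i k. \<forall>psi\<in>U. (deriv ^^ k) (\<lambda>t. lamhat n \<omega> t $ i) differentiable (at psi))"
    and A1: "\<forall>js. length js > 1 \<longrightarrow>
        Op M (\<lambda>n \<omega>. pds (l n \<omega>) js (psihat n \<omega>, lamhat n \<omega> (psihat n \<omega>))) (\<lambda>n. real n)"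
    and A2: "Op M (\<lambda>n \<omega>. (psihat n \<omega>, lamhat n \<omega> (psihat n \<omega>)) - (psi0, lam0)) (\<lambda>n. 1 / sqrt (real n))"
    and A3pos: "\<forall>n\<ge>1. \<forall>\<omega>\<in>space M. \<forall>e.
        (mat_eigenvalue ((1 / real n) *\<^sub>R obs_info (l n \<omega>) (psihat n \<omega>, lamhat n \<omega> (psihat n \<omega>))) e
         \<or> mat_eigenvalue ((1 / real n) *\<^sub>R obs_info (l n \<omega>) (psi0, lamhat n \<omega> psi0)) e
         \<or> mat_eigenvalue (real n *\<^sub>R matrix_inv (obs_info (l n \<omega>) (psihat n \<omega>, lamhat n \<omega> (psihat n \<omega>)))) e
         \<or> mat_eigenvalue (real n *\<^sub>R matrix_inv (obs_info (l n \<omega>) (psi0, lamhat n \<omega> psi0))) e)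
        \<longrightarrow> e > 0"
    and A3a: "Op_eig M (\<lambda>n \<omega>. (1 / real n) *\<^sub>R obs_info (l n \<omega>) (psihat n \<omega>, lamhat n \<omega> (psihat n \<omega>))) (\<lambda>n. 1)"
    and A3b: "Op_eig M (\<lambda>n \<omega>. (1 / real n) *\<^sub>R obs_info (l n \<omega>) (psi0, lamhat n \<omega> psi0)) (\<lambda>n. 1)"
    and A3c: "Op_eig M (\<lambda>n \<omega>. real n *\<^sub>R matrix_inv (obs_info (l n \<omega>) (psihat n \<omega>, lamhat n \<omega> (psihat n \<omega>)))) (\<lambda>n. 1)"
    and A3d: "Op_eig M (\<lambda>n \<omega>. real n *\<^sub>R matrix_inv (obs_info (l n \<omega>) (psi0, lamhat n \<omega> psi0))) (\<lambda>n. 1)"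
  shows "\<forall>k\<ge>1.
      Op M (\<lambda>n \<omega>. (\<chi> i. (deriv ^^ k) (\<lambda>t. lamhat n \<omega> t $ i) (psihat n \<omega>))) (\<lambda>n. 1)
    \<and> Op M (\<lambda>n \<omega>. (\<chi> i. (deriv ^^ k) (\<lambda>t. info_lp (l n \<omega>) (t, lamhat n \<omega> t) $ i) (psihat n \<omega>))) (\<lambda>n. real n)
    \<and> Op M (\<lambda>n \<omega>. (\<chi> i j. (deriv ^^ k) (\<lambda>t. info_ll (l n \<omega>) (t, lamhat n \<omega> t) $ i $ j) (psihat n \<omega>))) (\<lambda>n. real n)
    \<and> Op M (\<lambda>n \<omega>. kappa (l n \<omega>) (lamhat n \<omega>) k (psihat n \<omega>)) (\<lambda>n. real n powr (- (real k - 2) / 2))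
    \<and> Op M (\<lambda>n \<omega>. gam (l n \<omega>) (lamhat n \<omega>) k (psihat n \<omega>)) (\<lambda>n. 1)"
proof -
  interpret profile_likelihood_asymptotics M l psihat lamhat
    using smooth prof_max mle prof_smooth A1 A3pos A3c by unfold_locales blast+
  show ?thesis
    using lamhat_derivs_Op info_lp_derivs_Op info_ll_derivs_Op kappa_Op gam_Op by blast
qed

end
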